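(* For any graph $G=G_1\sqcup G_2$ with no edges connecting $G_1$ to $G_2$, we have $\lfloor \mathrm{sp}\rfloor(G)=\lfloor \mathrm{sp}\rfloor(G_1)+\lfloor \mathrm{sp}\rfloor(G_2)$.
   Context: All graphs are finite, have at least one vertex, have no loops, and may have multiple (parallel) edges. A unique shortest path is a shortest $u$–$v$ path $P$ such that every $u$–$v$ path with the same number of vertices is identical to $P$, where two paths with different edge sequences are different even if their vertex sequences agree; a single vertex is a unique shortest path. The parade number $\mathrm{usp}(G)$ is the largest number of vertices of a unique shortest path in $G$. The spectator number is $\mathrm{sp}(G)=|V(G)|-\mathrm{usp}(G)$. A minor of $H$ is any graph obtained from $H$ by a sequence of: deleting an isolated vertex, deleting an edge, contracting an edge that has no edge parallel to it. The spectator floor $\lfloor \mathrm{sp}\rfloor(G)$ is the minimum of $\mathrm{sp}(H)$ over all graphs $H$ of which $G$ is a minor. *)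

theory Defs
  imports Main
begin

record ('v, 'e) mgraph =
  verts :: "'v set"
  edges :: "'e set"
  ends  :: "'e \<Rightarrow> 'v set"

definition wf_graph :: "('v, 'e) mgraph \<Rightarrow> bool" where
  "wf_graph G \<longleftrightarrow> finite (verts G) \<and> finite (edges G) \<and> verts G \<noteq> {} \<and>
     (\<forall>e\<in>edges G. ends G e \<subseteq> verts G \<and> card (ends G e) = 2)"

definition is_path :: "('v, 'e) mgraph \<Rightarrow> 'v list \<Rightarrow> 'e list \<Rightarrow> bool" where
  "is_path G vs es \<longleftrightarrow> vs \<noteq> [] \<and> distinct vs \<and> set vs \<subseteq> verts G \<and>
     length es + 1 = length vs \<and>
     (\<forall>i < length es. es ! i \<in> edges G \<and> ends G (es ! i) = {vs ! i, vs ! Suc i})"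

definition path_between :: "('v, 'e) mgraph \<Rightarrow> 'v \<Rightarrow> 'v \<Rightarrow> 'v list \<Rightarrow> 'e list \<Rightarrow> bool" where
  "path_between G u v vs es \<longleftrightarrow> is_path G vs es \<and> hd vs = u \<and> last vs = v"

definition shortest_path :: "('v, 'e) mgraph \<Rightarrow> 'v \<Rightarrow> 'v \<Rightarrow> 'v list \<Rightarrow> 'e list \<Rightarrow> bool" where
  "shortest_path G u v vs es \<longleftrightarrow> path_between G u v vs es \<and>
     (\<forall>vs' es'. path_between G u v vs' es' \<longrightarrow> length vs \<le> length vs')"

definition unique_shortest_path :: "('v, 'e) mgraph \<Rightarrow> 'v list \<Rightarrow> 'e list \<Rightarrow> bool" where
  "unique_shortest_path G vs es \<longleftrightarrow> (\<exists>u v. shortest_path G u v vs es \<and>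
     (\<forall>vs' es'. path_between G u v vs' es' \<and> length vs' = length vs \<longrightarrow> vs' = vs \<and> es' = es))"

definition usp :: "('v, 'e) mgraph \<Rightarrow> nat" where
  "usp G = Max {length vs | vs es. unique_shortest_path G vs es}"

definition sp :: "('v, 'e) mgraph \<Rightarrow> nat" where
  "sp G = card (verts G) - usp G"

definition minor_step :: "('v, 'e) mgraph \<Rightarrow> ('v, 'e) mgraph \<Rightarrow> bool" where
  "minor_step H H' \<longleftrightarrow>
     (\<exists>x\<in>verts H. (\<forall>e\<in>edges H. x \<notin> ends H e) \<and>
        H' = \<lparr>verts = verts H - {x}, edges = edges H, ends = ends H\<rparr>)
   \<or> (\<exists>e\<in>edges H. H' = \<lparr>verts = verts H, edges = edges H - {e}, ends = ends H\<rparr>)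
   \<or> (\<exists>e\<in>edges H. \<exists>u w. ends H e = {u, w} \<and> u \<noteq> w \<and>
        (\<forall>f\<in>edges H. f \<noteq> e \<longrightarrow> ends H f \<noteq> ends H e) \<and>
        H' = \<lparr>verts = verts H - {w}, edges = edges H - {e},
               ends = (\<lambda>f. (\<lambda>x. if x = w then u else x) ` ends H f)\<rparr>)"

definition graph_iso :: "('v, 'e) mgraph \<Rightarrow> ('w, 'f) mgraph \<Rightarrow> bool" where
  "graph_iso A B \<longleftrightarrow> (\<exists>f g. bij_betw f (verts A) (verts B) \<and> bij_betw g (edges A) (edges B) \<and>
     (\<forall>e\<in>edges A. ends B (g e) = f ` ends A e))"

definition is_minor :: "('v, 'e) mgraph \<Rightarrow> ('w, 'f) mgraph \<Rightarrow> bool" where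
  "is_minor G H \<longleftrightarrow> (\<exists>H'. minor_step\<^sup>*\<^sup>* H H' \<and> graph_iso H' G)"

text \<open>Spectator floor; hosts H range over graphs on nat (every finite graph
is isomorphic to one).\<close>

definition sp_floor :: "('v, 'e) mgraph \<Rightarrow> nat" where
  "sp_floor G = Inf {sp H | H :: (nat, nat) mgraph. wf_graph H \<and> is_minor G H}"

definition induced :: "('v, 'e) mgraph \<Rightarrow> 'v set \<Rightarrow> ('v, 'e) mgraph" where
  "induced G S = \<lparr>verts = S, edges = {e\<in>edges G. ends G e \<subseteq> S}, ends = ends G\<rparr>"

end

theory Submission
  imports Defs
begin

text \<open>
  \<open>\<le>\<close>: take hosts \<open>H\<^sub>1\<close>, \<open>H\<^sub>2\<close> of \<open>G\<^sub>1\<close>, \<open>G\<^sub>2\<close> attaining the floors, with longest unique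
  shortest paths \<open>P\<^sub>1\<close>, \<open>P\<^sub>2\<close>, and join the end of \<open>P\<^sub>1\<close> to the start of \<open>P\<^sub>2\<close> by a new edge. This
  edge is a bridge, so every path between the outer ends of \<open>P\<^sub>1\<close> and \<open>P\<^sub>2\<close> crosses it once and
  splits into paths of \<open>H\<^sub>1\<close> and \<open>H\<^sub>2\<close>; hence the concatenation is again a unique shortest
  path, and the new host of \<open>G\<close> has at most \<open>sp H\<^sub>1 + sp H\<^sub>2\<close> spectators.

  \<open>\<ge>\<close>: given any host \<open>H\<close> of \<open>G\<close> with a longest unique shortest path \<open>P\<close>, split the vertices of
  \<open>H\<close> into the branch sets of \<open>G\<^sub>2\<close> and the rest, and add \<open>P\<close> to both parts. The two induced
  subgraphs host \<open>G\<^sub>1\<close> and \<open>G\<^sub>2\<close>, both contain \<open>P\<close> as a unique shortest path, and overlap in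
  exactly \<open>P\<close>, so their spectator numbers add up to at most \<open>sp H\<close>.

  Minors are handled through models (branch sets), which are easy to restrict, combine and
  transport along isomorphisms.
\<close>

section \<open>Paths\<close>

lemma induced_simps [simp]:
  "verts (induced G S) = S" "edges (induced G S) = {e\<in>edges G. ends G e \<subseteq> S}"
  "ends (induced G S) = ends G"
  unfolding induced_def by simp_all

lemma is_path_singleton_iff: "is_path G [v] es \<longleftrightarrow> es = [] \<and> v \<in> verts G"
  unfolding is_path_def by auto

lemma is_path_Cons_iff:
  "is_path G (v # w # vs) (e # es) \<longleftrightarrow>
     v \<in> verts G \<and> v \<notin> set (w # vs) \<and> e \<in> edges G \<and> ends G e = {v, w} \<and> is_path G (w # vs) es"
  unfolding is_path_def by (auto simp: less_Suc_eq_0_disj)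

lemma is_path_append_iff:
  assumes "length es1 + 1 = length vs1" and "vs2 \<noteq> []"
  shows "is_path G (vs1 @ vs2) (es1 @ e # es2) \<longleftrightarrow>
    is_path G vs1 es1 \<and> is_path G vs2 es2 \<and> set vs1 \<inter> set vs2 = {} \<and>
    e \<in> edges G \<and> ends G e = {last vs1, hd vs2}"
  using assms
proof (induction vs1 arbitrary: es1)
  case Nil
  then show ?case by simp
next
  case (Cons v vs1)
  show ?case
  proof (cases es1)
    case Nil
    with Cons.prems obtain w ws where "vs1 = []" "vs2 = w # ws" by (cases vs2) auto
    with Nil show ?thesis by (auto simp: is_path_Cons_iff is_path_singleton_iff)
  next
    case (Cons f fs)
    with Cons.prems obtain u us where "vs1 = u # us" by (cases vs1) auto
    with Cons Cons.IH[of fs] Cons.prems show ?thesis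
      by (auto simp: is_path_Cons_iff)
  qed
qed

lemma is_path_split:
  assumes "is_path G vs (es1 @ e # es2)"
  obtains vs1 vs2 where "vs = vs1 @ vs2" "length es1 + 1 = length vs1" "vs2 \<noteq> []"
proof
  have "length vs = length es1 + length es2 + 2"
    using assms unfolding is_path_def by simp
  then show "length es1 + 1 = length (take (length es1 + 1) vs)" "drop (length es1 + 1) vs \<noteq> []"
    by simp_all
qed simp

lemma is_path_induced_iff:
  assumes "S \<subseteq> verts G"
  shows "is_path (induced G S) vs es \<longleftrightarrow> is_path G vs es \<and> set vs \<subseteq> S"
proof -
  have "{vs ! i, vs ! Suc i} \<subseteq> set vs" if "i < length es" "length es + 1 = length vs" for i
    using that by simp
  then show ?thesis
    using assms unfolding is_path_def by (auto 0 3)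
qed

lemma is_path_stays_on_side:
  assumes "is_path G vs es" "b \<notin> set es"
    and cut: "\<forall>e\<in>edges G - {b}. \<forall>x\<in>ends G e. \<forall>y\<in>ends G e. x \<in> S \<longleftrightarrow> y \<in> S"
    and "x \<in> set vs"
  shows "x \<in> S \<longleftrightarrow> hd vs \<in> S"
  using assms(1,2,4)
proof (induction vs arbitrary: es)
  case Nil
  then show ?case by simp
next
  case (Cons v vs)
  show ?case
  proof (cases vs)
    case Nil
    with Cons.prems show ?thesis by simp
  next
    case (Cons w ws)
    with Cons.prems(1) obtain e es' where es: "es = e # es'"
      unfolding is_path_def by (cases es) auto
    with Cons.prems(1,2) \<open>vs = w # ws\<close> have "e \<in> edges G" "e \<noteq> b" "ends G e = {v, w}"
      "is_path G vs es'" "b \<notin> set es'"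
      by (auto simp: is_path_Cons_iff)
    with cut have "v \<in> S \<longleftrightarrow> w \<in> S" by blast
    with Cons.IH[OF \<open>is_path G vs es'\<close> \<open>b \<notin> set es'\<close>] Cons.prems(3) \<open>vs = w # ws\<close>
    show ?thesis by auto
  qed
qed

section \<open>Unique shortest paths\<close>

lemma unique_shortest_path_iff:
  "unique_shortest_path G vs es \<longleftrightarrow> is_path G vs es \<and>
     (\<forall>vs' es'. path_between G (hd vs) (last vs) vs' es' \<and> length vs' \<le> length vs \<longrightarrow>
        vs' = vs \<and> es' = es)"
  (is "_ \<longleftrightarrow> _ \<and> ?unique")
proof
  assume "unique_shortest_path G vs es"
  then obtain u v where "shortest_path G u v vs es"
    and same_length: "\<forall>vs' es'. path_between G u v vs' es' \<and> length vs' = length vs \<longrightarrow>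
      vs' = vs \<and> es' = es"
    unfolding unique_shortest_path_def by blast
  then show "is_path G vs es \<and> ?unique"
    unfolding shortest_path_def path_between_def by (metis le_antisym)
next
  assume "is_path G vs es \<and> ?unique"
  then have "shortest_path G (hd vs) (last vs) vs es"
    unfolding shortest_path_def path_between_def by (metis nat_le_linear)
  with \<open>is_path G vs es \<and> ?unique\<close> show "unique_shortest_path G vs es"
    unfolding unique_shortest_path_def by (metis order.refl)
qed

lemma unique_shortest_path_is_path: "unique_shortest_path G vs es \<Longrightarrow> is_path G vs es"
  unfolding unique_shortest_path_iff by (rule conjunct1)

lemma unique_shortest_pathD:
  assumes "unique_shortest_path G vs es" "path_between G (hd vs) (last vs) vs' es'"
  shows "length vs \<le> length vs'" and "length vs' = length vs \<Longrightarrow> vs' = vs \<and> es' = es"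
  using assms unfolding unique_shortest_path_iff by (metis nat_le_linear order.refl)+

lemma unique_shortest_path_singleton: "v \<in> verts G \<Longrightarrow> unique_shortest_path G [v] []"
  unfolding unique_shortest_path_iff path_between_def is_path_def
  by (auto simp: le_Suc_eq length_Suc_conv)

lemma unique_shortest_path_induced:
  assumes "unique_shortest_path G vs es" "set vs \<subseteq> S" "S \<subseteq> verts G"
  shows "unique_shortest_path (induced G S) vs es"
  using assms unfolding unique_shortest_path_iff path_between_def
  by (auto simp: is_path_induced_iff)

lemma length_path_le_card:
  assumes "finite (verts G)" "is_path G vs es"
  shows "length vs \<le> card (verts G)"
proof -
  have "distinct vs" "set vs \<subseteq> verts G"
    using assms(2) unfolding is_path_def by simp_all
  then have "card (set vs) \<le> card (verts G)"
    using card_mono[OF assms(1)] by blast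
  with \<open>distinct vs\<close> show ?thesis
    by (simp add: distinct_card)
qed

lemma finite_usp_lengths:
  assumes "finite (verts G)"
  shows "finite {length vs | vs es. unique_shortest_path G vs es}"
proof (rule finite_subset)
  show "{length vs | vs es. unique_shortest_path G vs es} \<subseteq> {..card (verts G)}"
  proof
    fix n assume "n \<in> {length vs | vs es. unique_shortest_path G vs es}"
    then obtain vs es where "n = length vs" "unique_shortest_path G vs es" by blast
    then show "n \<in> {..card (verts G)}"
      using length_path_le_card[OF assms unique_shortest_path_is_path] by simp
  qed
qed simp

lemma length_le_usp:
  assumes "finite (verts G)" "unique_shortest_path G vs es"
  shows "length vs \<le> usp G"
  unfolding usp_def using assms(2) by (intro Max_ge[OF finite_usp_lengths[OF assms(1)]]) blast

lemma usp_attained: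
  assumes "finite (verts G)" "verts G \<noteq> {}"
  obtains vs es where "unique_shortest_path G vs es" "length vs = usp G"
proof -
  from assms(2) obtain v where "v \<in> verts G" by blast
  then have "length [v] \<in> {length vs | vs es. unique_shortest_path G vs es}"
    using unique_shortest_path_singleton by fast
  then have "usp G \<in> {length vs | vs es. unique_shortest_path G vs es}"
    unfolding usp_def by (intro Max_in[OF finite_usp_lengths[OF assms(1)]]) blast
  then obtain vs es where "usp G = length vs" "unique_shortest_path G vs es"
    by blast
  then show ?thesis
    using that by simp
qed

lemma usp_le_card:
  assumes "finite (verts G)" "verts G \<noteq> {}"
  shows "usp G \<le> card (verts G)"
proof -
  obtain vs es where "unique_shortest_path G vs es" "length vs = usp G"
    using usp_attained[OF assms] .
  moreover have "length vs \<le> card (verts G)"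
    by (rule length_path_le_card[OF assms(1) unique_shortest_path_is_path]) fact
  ultimately show ?thesis by simp
qed

lemma is_path_ends_subset:
  assumes "is_path G vs es" "e \<in> set es"
  shows "ends G e \<subseteq> set vs"
proof -
  obtain i where "i < length es" "e = es ! i"
    using assms(2) by (auto simp: in_set_conv_nth)
  with assms(1) show ?thesis
    unfolding is_path_def by auto
qed

context
  fixes G :: "('v, 'e) mgraph" and S :: "'v set" and b :: 'e and t s :: 'v
  assumes bridge: "b \<in> edges G" "ends G b = {t, s}" "t \<in> S" "s \<notin> S"
    and cut: "\<forall>e\<in>edges G - {b}. \<forall>x\<in>ends G e. \<forall>y\<in>ends G e. x \<in> S \<longleftrightarrow> y \<in> S"
    and S_verts: "S \<subseteq> verts G"
begin

lemma is_path_across_bridge: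
  assumes P: "is_path G P E" "hd P \<in> S" "last P \<notin> S"
  obtains P1 E1 P2 E2 where "P = P1 @ P2" "E = E1 @ b # E2"
    "is_path (induced G S) P1 E1" "hd P1 = hd P" "last P1 = t"
    "is_path (induced G (verts G - S)) P2 E2" "hd P2 = s" "last P2 = last P"
proof -
  have "b \<in> set E"
  proof (rule ccontr)
    assume "b \<notin> set E"
    moreover have "last P \<in> set P"
      using P(1) unfolding is_path_def by simp
    ultimately show False
      using is_path_stays_on_side[OF P(1) _ cut] P(2,3) by metis
  qed
  then obtain E1 E2 where E: "E = E1 @ b # E2" "b \<notin> set E1"
    using split_list_first by metis
  then obtain P1 P2 where P12: "P = P1 @ P2" "length E1 + 1 = length P1" "P2 \<noteq> []"
    using P(1) is_path_split by metis
  then have "P1 \<noteq> []"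
    by auto
  have paths: "is_path G P1 E1" "is_path G P2 E2" "set P1 \<inter> set P2 = {}" "ends G b = {last P1, hd P2}"
    using P(1) unfolding E(1) P12(1) is_path_append_iff[OF P12(2,3)] by blast+
  have "hd P1 = hd P" "last P2 = last P"
    using P12 \<open>P1 \<noteq> []\<close> by simp_all
  have "x \<in> S" if "x \<in> set P1" for x
    using is_path_stays_on_side[OF paths(1) E(2) cut that] P(2) \<open>hd P1 = hd P\<close> by simp
  then have P1_S: "set P1 \<subseteq> S"
    by blast
  then have "last P1 \<in> S"
    using \<open>P1 \<noteq> []\<close> by auto
  then have "last P1 = t" "hd P2 = s"
    using paths(4) bridge(2,4) by (auto simp: doubleton_eq_iff)
  have "b \<notin> set E2"
  proof
    assume "b \<in> set E2"
    then have "last P1 \<in> set P2"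
      using is_path_ends_subset[OF paths(2)] paths(4) by blast
    moreover have "last P1 \<in> set P1"
      using \<open>P1 \<noteq> []\<close> by simp
    ultimately show False
      using paths(3) by blast
  qed
  then have "x \<notin> S" if "x \<in> set P2" for x
    using is_path_stays_on_side[OF paths(2) _ cut that] bridge(4) \<open>hd P2 = s\<close> by simp
  moreover have "set P2 \<subseteq> verts G"
    using paths(2) unfolding is_path_def by blast
  ultimately have "set P2 \<subseteq> verts G - S"
    by blast
  with P1_S paths(1,2) S_verts have "is_path (induced G S) P1 E1"
    "is_path (induced G (verts G - S)) P2 E2"
    by (simp_all add: is_path_induced_iff)
  with that P12(1) E(1) \<open>hd P1 = hd P\<close> \<open>last P1 = t\<close> \<open>hd P2 = s\<close> \<open>last P2 = last P\<close>
  show ?thesis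
    by blast
qed

lemma unique_shortest_path_across_bridge:
  assumes U1: "unique_shortest_path (induced G S) vs1 es1" "last vs1 = t"
    and U2: "unique_shortest_path (induced G (verts G - S)) vs2 es2" "hd vs2 = s"
  shows "unique_shortest_path G (vs1 @ vs2) (es1 @ b # es2)"
proof -
  have p1: "is_path (induced G S) vs1 es1" and p2: "is_path (induced G (verts G - S)) vs2 es2"
    using U1(1) U2(1) by (simp_all add: unique_shortest_path_is_path)
  then have sets: "set vs1 \<subseteq> S" "set vs2 \<subseteq> verts G - S"
    and ne: "vs1 \<noteq> []" "vs2 \<noteq> []" and len: "length es1 + 1 = length vs1"
    unfolding is_path_def by simp_all
  have path: "is_path G (vs1 @ vs2) (es1 @ b # es2)"
    unfolding is_path_append_iff[OF len ne(2)]
    using p1 p2 sets S_verts bridge(1,2) U1(2) U2(2) by (auto simp: is_path_induced_iff)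
  have hd_last: "hd (vs1 @ vs2) = hd vs1" "last (vs1 @ vs2) = last vs2"
    using ne by simp_all
  show ?thesis
    unfolding unique_shortest_path_iff
  proof (intro conjI allI impI path; elim conjE)
    fix P E
    assume "path_between G (hd (vs1 @ vs2)) (last (vs1 @ vs2)) P E"
      and short: "length P \<le> length (vs1 @ vs2)"
    then have P: "is_path G P E" "hd P = hd vs1" "last P = last vs2"
      unfolding path_between_def hd_last by blast+
    have "hd vs1 \<in> S" "last vs2 \<notin> S"
      using sets hd_in_set[OF ne(1)] last_in_set[OF ne(2)] by auto
    then obtain P1 E1 P2 E2 where split: "P = P1 @ P2" "E = E1 @ b # E2"
      and Q1: "path_between (induced G S) (hd vs1) (last vs1) P1 E1"
      and Q2: "path_between (induced G (verts G - S)) (hd vs2) (last vs2) P2 E2"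
      using is_path_across_bridge[OF P(1)] P(2,3) U1(2) U2(2) unfolding path_between_def by metis
    have "length vs1 \<le> length P1" "length vs2 \<le> length P2"
      using unique_shortest_pathD(1)[OF U1(1) Q1] unique_shortest_pathD(1)[OF U2(1) Q2] .
    then have "length P1 = length vs1" "length P2 = length vs2"
      using short split(1) by simp_all
    then have "P1 = vs1 \<and> E1 = es1" "P2 = vs2 \<and> E2 = es2"
      using unique_shortest_pathD(2)[OF U1(1) Q1] unique_shortest_pathD(2)[OF U2(1) Q2] by blast+
    then show "P = vs1 @ vs2" "E = es1 @ b # es2"
      using split by simp_all
  qed
qed

end

section \<open>Embeddings and isomorphisms\<close>

definition graph_embedding :: "('v, 'e) mgraph \<Rightarrow> ('w, 'f) mgraph \<Rightarrow> ('v \<Rightarrow> 'w) \<Rightarrow> ('e \<Rightarrow> 'f) \<Rightarrow> bool"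
  where "graph_embedding H C f g \<longleftrightarrow>
    inj_on f (verts H) \<and> f ` verts H \<subseteq> verts C \<and> inj_on g (edges H) \<and> g ` edges H \<subseteq> edges C \<and>
    (\<forall>e\<in>edges H. ends C (g e) = f ` ends H e)"

definition graph_iso_by :: "('v, 'e) mgraph \<Rightarrow> ('w, 'f) mgraph \<Rightarrow> ('v \<Rightarrow> 'w) \<Rightarrow> ('e \<Rightarrow> 'f) \<Rightarrow> bool"
  where "graph_iso_by A B f g \<longleftrightarrow>
    bij_betw f (verts A) (verts B) \<and> bij_betw g (edges A) (edges B) \<and>
    (\<forall>e\<in>edges A. ends B (g e) = f ` ends A e)"

lemma graph_iso_iff: "graph_iso A B \<longleftrightarrow> (\<exists>f g. graph_iso_by A B f g)"
  unfolding graph_iso_def graph_iso_by_def ..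

lemma graph_iso_by_embedding: "graph_iso_by A B f g \<Longrightarrow> graph_embedding A B f g"
  unfolding graph_iso_by_def graph_embedding_def bij_betw_def by simp

lemma graph_iso_by_inv:
  assumes "graph_iso_by A B f g" "\<forall>e\<in>edges A. ends A e \<subseteq> verts A"
  shows "graph_iso_by B A (inv_into (verts A) f) (inv_into (edges A) g)"
  unfolding graph_iso_by_def
proof (intro conjI ballI)
  show "bij_betw (inv_into (verts A) f) (verts B) (verts A)"
    "bij_betw (inv_into (edges A) g) (edges B) (edges A)"
    using assms(1) unfolding graph_iso_by_def by (simp_all add: bij_betw_inv_into)
next
  fix e' assume "e' \<in> edges B"
  then obtain e where e: "e \<in> edges A" "e' = g e"
    using assms(1) unfolding graph_iso_by_def bij_betw_def by blast
  then have "ends B e' = f ` ends A e" "inv_into (edges A) g e' = e"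
    using assms(1) unfolding graph_iso_by_def bij_betw_def by simp_all
  moreover have "inv_into (verts A) f ` f ` ends A e = ends A e"
    using assms e unfolding graph_iso_by_def bij_betw_def by (simp add: inv_into_image_cancel)
  ultimately show "ends A (inv_into (edges A) g e') = inv_into (verts A) f ` ends B e'"
    by simp
qed

lemma wf_graph_iso_by:
  assumes "wf_graph A" "graph_iso_by A B f g"
  shows "wf_graph B"
proof -
  have f: "inj_on f (verts A)" "f ` verts A = verts B"
    and g: "g ` edges A = edges B" and ends: "\<forall>e\<in>edges A. ends B (g e) = f ` ends A e"
    using assms(2) unfolding graph_iso_by_def bij_betw_def by blast+
  have "ends B (g e) \<subseteq> verts B \<and> card (ends B (g e)) = 2" if "e \<in> edges A" for e
  proof -
    have "ends A e \<subseteq> verts A" "card (ends A e) = 2"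
      using assms(1) that unfolding wf_graph_def by blast+
    moreover have "inj_on f (ends A e)"
      using f(1) \<open>ends A e \<subseteq> verts A\<close> by (rule inj_on_subset)
    ultimately show ?thesis
      using ends that f(2) by (force simp: card_image)
  qed
  moreover have "finite (verts B)" "finite (edges B)" "verts B \<noteq> {}"
    using assms(1) unfolding wf_graph_def f(2)[symmetric] g[symmetric] by auto
  ultimately show ?thesis
    unfolding wf_graph_def g[symmetric] by blast
qed

lemma is_path_embedding:
  assumes "graph_embedding H C f g" "is_path H vs es"
  shows "is_path C (map f vs) (map g es)"
  using assms unfolding graph_embedding_def is_path_def
  by (auto simp: distinct_map inj_on_subset)

lemma unique_shortest_path_graph_iso_by:
  assumes iso: "graph_iso_by A B f g" and A: "\<forall>e\<in>edges A. ends A e \<subseteq> verts A"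
    and usp: "unique_shortest_path A vs es"
  shows "unique_shortest_path B (map f vs) (map g es)"
  unfolding unique_shortest_path_iff
proof (intro conjI allI impI; (elim conjE)?)
  have path: "is_path A vs es"
    using usp by (rule unique_shortest_path_is_path)
  then show "is_path B (map f vs) (map g es)"
    using is_path_embedding[OF graph_iso_by_embedding[OF iso]] by blast
  define f' where "f' = inv_into (verts A) f"
  define g' where "g' = inv_into (edges A) g"
  have iso': "graph_iso_by B A f' g'"
    unfolding f'_def g'_def using graph_iso_by_inv[OF iso A] .
  have f'f: "f' (f x) = x" if "x \<in> verts A" for x
    using iso that unfolding f'_def graph_iso_by_def bij_betw_def by simp
  have ff': "f (f' y) = y" if "y \<in> verts B" for y
    using iso that unfolding f'_def graph_iso_by_def by (meson bij_betw_inv_into_right)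
  have gg': "g (g' y) = y" if "y \<in> edges B" for y
    using iso that unfolding g'_def graph_iso_by_def by (meson bij_betw_inv_into_right)
  have ends_in: "hd vs \<in> verts A" "last vs \<in> verts A"
    using path unfolding is_path_def by auto
  fix P E
  assume P: "path_between B (hd (map f vs)) (last (map f vs)) P E" "length P \<le> length (map f vs)"
  then have "is_path B P E"
    unfolding path_between_def by blast
  then have "is_path A (map f' P) (map g' E)"
    using is_path_embedding[OF graph_iso_by_embedding[OF iso']] by blast
  moreover have "hd (map f' P) = hd vs" "last (map f' P) = last vs"
    using P path f'f ends_in unfolding path_between_def is_path_def by (simp_all add: hd_map last_map)
  moreover have "length (map f' P) \<le> length vs"
    using P(2) by simp
  ultimately have pulled_back: "map f' P = vs" "map g' E = es"
    using usp unfolding unique_shortest_path_iff path_between_def by blast+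
  have "set P \<subseteq> verts B" "set E \<subseteq> edges B"
    using \<open>is_path B P E\<close> unfolding is_path_def by (auto simp: in_set_conv_nth)
  then have "map f (map f' P) = P" "map g (map g' E) = E"
    unfolding map_map using ff' gg' by (simp_all add: map_idI subset_iff)
  with pulled_back show "P = map f vs" "E = map g es"
    by simp_all
qed

lemma usp_le_graph_iso_by:
  assumes "wf_graph A" "graph_iso_by A B f g"
  shows "usp A \<le> usp B"
proof -
  have "finite (verts A)" "verts A \<noteq> {}" "\<forall>e\<in>edges A. ends A e \<subseteq> verts A"
    using assms(1) unfolding wf_graph_def by blast+
  then obtain vs es where "unique_shortest_path A vs es" "length vs = usp A"
    by (elim usp_attained)
  then have "unique_shortest_path B (map f vs) (map g es)"
    using unique_shortest_path_graph_iso_by[OF assms(2)] \<open>\<forall>e\<in>edges A. _\<close> by blast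
  moreover have "finite (verts B)"
    using wf_graph_iso_by[OF assms] unfolding wf_graph_def by blast
  ultimately show ?thesis
    using length_le_usp \<open>length vs = usp A\<close> by fastforce
qed

lemma sp_graph_iso_by:
  assumes "wf_graph A" "graph_iso_by A B f g"
  shows "sp B = sp A"
proof -
  have "\<forall>e\<in>edges A. ends A e \<subseteq> verts A"
    using assms(1) unfolding wf_graph_def by blast
  then have "usp B \<le> usp A"
    using usp_le_graph_iso_by[OF wf_graph_iso_by[OF assms] graph_iso_by_inv[OF assms(2)]] by blast
  moreover have "card (verts B) = card (verts A)"
    using assms(2) unfolding graph_iso_by_def by (metis bij_betw_same_card)
  ultimately show ?thesis
    unfolding sp_def using usp_le_graph_iso_by[OF assms] by simp
qed

lemma ex_graph_iso_nat:
  fixes A :: "('v, 'e) mgraph"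
  assumes "finite (verts A)" "finite (edges A)"
  obtains B :: "(nat, nat) mgraph" and f g where "graph_iso_by A B f g"
proof -
  obtain f :: "'v \<Rightarrow> nat" where f: "inj_on f (verts A)"
    using ex_bij_betw_finite_nat[OF assms(1)] bij_betw_imp_inj_on by blast
  obtain g :: "'e \<Rightarrow> nat" where g: "inj_on g (edges A)"
    using ex_bij_betw_finite_nat[OF assms(2)] bij_betw_imp_inj_on by blast
  define B :: "(nat, nat) mgraph" where
    "B = \<lparr>verts = f ` verts A, edges = g ` edges A, ends = (\<lambda>x. f ` ends A (inv_into (edges A) g x))\<rparr>"
  have "graph_iso_by A B f g"
    unfolding graph_iso_by_def B_def using f g by (simp add: inj_on_imp_bij_betw)
  then show ?thesis by (rule that)
qed

section \<open>Connected branch sets\<close>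

definition multigraph :: "('v, 'e) mgraph \<Rightarrow> bool" where
  "multigraph H \<longleftrightarrow> finite (verts H) \<and> finite (edges H) \<and>
     (\<forall>e\<in>edges H. ends H e \<subseteq> verts H \<and> card (ends H e) = 2)"

lemma wf_graph_iff_multigraph: "wf_graph H \<longleftrightarrow> multigraph H \<and> verts H \<noteq> {}"
  unfolding wf_graph_def multigraph_def by blast

lemma multigraphD:
  assumes "multigraph H" "e \<in> edges H"
  shows "ends H e \<subseteq> verts H" and "\<exists>a b. ends H e = {a, b} \<and> a \<noteq> b"
  using assms unfolding multigraph_def by (auto simp: card_2_iff)

definition adj :: "('v, 'e) mgraph \<Rightarrow> 'v set \<Rightarrow> 'v \<Rightarrow> 'v \<Rightarrow> bool" where
  "adj H S a b \<longleftrightarrow> a \<in> S \<and> b \<in> S \<and> (\<exists>e\<in>edges H. ends H e = {a, b})"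

definition conn :: "('v, 'e) mgraph \<Rightarrow> 'v set \<Rightarrow> bool" where
  "conn H S \<longleftrightarrow> (\<forall>a\<in>S. \<forall>b\<in>S. (adj H S)\<^sup>*\<^sup>* a b)"

lemma symp_adj: "symp (adj H S)"
  unfolding adj_def by (intro sympI) (auto simp: insert_commute)

lemma adj_rtranclp_sym: "(adj H S)\<^sup>*\<^sup>* a b \<Longrightarrow> (adj H S)\<^sup>*\<^sup>* b a"
  by (rule sympD[OF symp_rtranclp[OF symp_adj]])

lemma conn_singleton: "conn H {a}"
  unfolding conn_def by simp

lemma conn_mono:
  assumes "conn H S" "\<And>c d. adj H S c d \<Longrightarrow> adj H' S c d"
  shows "conn H' S"
  using assms unfolding conn_def by (metis mono_rtranclp)

lemma conn_image:
  assumes "conn H S" "\<And>c d. adj H S c d \<Longrightarrow> \<phi> c = \<phi> d \<or> adj H' (\<phi> ` S) (\<phi> c) (\<phi> d)"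
  shows "conn H' (\<phi> ` S)"
  unfolding conn_def
proof (intro ballI)
  fix a' b' assume "a' \<in> \<phi> ` S" "b' \<in> \<phi> ` S"
  then obtain a b where "a \<in> S" "b \<in> S" "a' = \<phi> a" "b' = \<phi> b" by blast
  then have "(adj H S)\<^sup>*\<^sup>* a b"
    using assms(1) unfolding conn_def by blast
  then show "(adj H' (\<phi> ` S))\<^sup>*\<^sup>* a' b'"
    unfolding \<open>a' = \<phi> a\<close> \<open>b' = \<phi> b\<close>
  proof (induction rule: rtranclp_induct)
    case (step c d)
    with assms(2)[OF step(2)] show ?case
      by (metis rtranclp.rtrancl_into_rtrancl)
  qed simp
qed

lemma conn_lift:
  assumes "conn K S" "\<phi> ` T \<subseteq> S"
    and moves: "\<And>a. a \<in> T \<Longrightarrow> (adj H T)\<^sup>*\<^sup>* a (\<phi> a)"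
    and lifts: "\<And>c d. adj K S c d \<Longrightarrow> \<exists>p q. \<phi> p = c \<and> \<phi> q = d \<and> adj H T p q"
  shows "conn H T"
  unfolding conn_def
proof (intro ballI)
  have step: "(adj H T)\<^sup>*\<^sup>* c d" if cd: "adj K S c d" for c d
  proof -
    obtain p q where pq: "\<phi> p = c" "\<phi> q = d" "adj H T p q"
      using lifts[OF cd] by blast
    then have "p \<in> T" "q \<in> T"
      unfolding adj_def by blast+
    have "(adj H T)\<^sup>*\<^sup>* c p"
      using adj_rtranclp_sym[OF moves[OF \<open>p \<in> T\<close>]] pq(1) by simp
    also have "(adj H T)\<^sup>*\<^sup>* p q"
      using pq(3) by (rule r_into_rtranclp)
    also have "(adj H T)\<^sup>*\<^sup>* q d"
      using moves[OF \<open>q \<in> T\<close>] pq(2) by simp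
    finally show ?thesis .
  qed
  fix a b assume "a \<in> T" "b \<in> T"
  then have "(adj K S)\<^sup>*\<^sup>* (\<phi> a) (\<phi> b)"
    using assms(1,2) unfolding conn_def by blast
  moreover have "(adj K S)\<^sup>*\<^sup>* \<le> ((adj H T)\<^sup>*\<^sup>*)\<^sup>*\<^sup>*"
    using step by (intro rtranclp_mono) blast
  ultimately have "(adj H T)\<^sup>*\<^sup>* (\<phi> a) (\<phi> b)"
    by (metis predicate2D rtranclp_idemp)
  then show "(adj H T)\<^sup>*\<^sup>* a b"
    using moves[OF \<open>a \<in> T\<close>] adj_rtranclp_sym[OF moves[OF \<open>b \<in> T\<close>]] by (meson rtranclp_trans)
qed

text \<open>Branch-set models: \<open>\<beta> v\<close> is the connected set of vertices of \<open>H\<close> that is contracted onto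
  \<open>v\<close>. A model exists iff \<open>G\<close> is a minor of \<open>H\<close>.\<close>

definition model :: "('v, 'e) mgraph \<Rightarrow> ('w, 'f) mgraph \<Rightarrow> ('v \<Rightarrow> 'w set) \<Rightarrow> ('e \<Rightarrow> 'f) \<Rightarrow> bool" where
  "model G H \<beta> \<eta> \<longleftrightarrow>
    (\<forall>v\<in>verts G. \<beta> v \<noteq> {} \<and> \<beta> v \<subseteq> verts H \<and> conn H (\<beta> v)) \<and>
    (\<forall>v\<in>verts G. \<forall>w\<in>verts G. v \<noteq> w \<longrightarrow> \<beta> v \<inter> \<beta> w = {}) \<and>
    inj_on \<eta> (edges G) \<and> \<eta> ` edges G \<subseteq> edges H \<and>
    (\<forall>e\<in>edges G. \<forall>x\<in>ends G e. ends H (\<eta> e) \<inter> \<beta> x \<noteq> {}) \<and>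
    (\<forall>e\<in>edges G. ends H (\<eta> e) \<subseteq> (\<Union>x\<in>ends G e. \<beta> x))"

lemma modelD:
  assumes "model G H \<beta> \<eta>"
  shows model_nonempty: "v \<in> verts G \<Longrightarrow> \<beta> v \<noteq> {}"
    and model_subset: "v \<in> verts G \<Longrightarrow> \<beta> v \<subseteq> verts H"
    and model_conn: "v \<in> verts G \<Longrightarrow> conn H (\<beta> v)"
    and model_disjoint: "v \<in> verts G \<Longrightarrow> w \<in> verts G \<Longrightarrow> v \<noteq> w \<Longrightarrow> \<beta> v \<inter> \<beta> w = {}"
    and model_inj: "inj_on \<eta> (edges G)"
    and model_edges: "\<eta> ` edges G \<subseteq> edges H"
    and model_meets: "e \<in> edges G \<Longrightarrow> x \<in> ends G e \<Longrightarrow> ends H (\<eta> e) \<inter> \<beta> x \<noteq> {}"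
    and model_within: "e \<in> edges G \<Longrightarrow> ends H (\<eta> e) \<subseteq> (\<Union>x\<in>ends G e. \<beta> x)"
  using assms unfolding model_def by (elim conjE; simp)+

lemma modelI:
  assumes "\<And>v. v \<in> verts G \<Longrightarrow> \<beta> v \<noteq> {}"
    "\<And>v. v \<in> verts G \<Longrightarrow> \<beta> v \<subseteq> verts H"
    "\<And>v. v \<in> verts G \<Longrightarrow> conn H (\<beta> v)"
    "\<And>v w. v \<in> verts G \<Longrightarrow> w \<in> verts G \<Longrightarrow> v \<noteq> w \<Longrightarrow> \<beta> v \<inter> \<beta> w = {}"
    "inj_on \<eta> (edges G)"
    "\<eta> ` edges G \<subseteq> edges H"
    "\<And>e x. e \<in> edges G \<Longrightarrow> x \<in> ends G e \<Longrightarrow> ends H (\<eta> e) \<inter> \<beta> x \<noteq> {}"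
    "\<And>e. e \<in> edges G \<Longrightarrow> ends H (\<eta> e) \<subseteq> (\<Union>x\<in>ends G e. \<beta> x)"
  shows "model G H \<beta> \<eta>"
  unfolding model_def using assms by (intro conjI ballI impI) auto

lemma model_singletons: "model G G (\<lambda>v. {v}) id"
  by (rule modelI) (auto simp: conn_singleton)

lemma model_embedding:
  assumes "model G H \<beta> \<eta>" "graph_embedding H C f g"
  shows "model G C (\<lambda>v. f ` \<beta> v) (g \<circ> \<eta>)"
proof -
  have f: "inj_on f (verts H)" "f ` verts H \<subseteq> verts C"
    and g: "inj_on g (edges H)" "g ` edges H \<subseteq> edges C"
    and ends: "\<And>e. e \<in> edges H \<Longrightarrow> ends C (g e) = f ` ends H e"
    using assms(2) unfolding graph_embedding_def by blast+
  have ends_\<eta>: "ends C (g (\<eta> e)) = f ` ends H (\<eta> e)" if "e \<in> edges G" for e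
    using ends model_edges[OF assms(1)] that by blast
  have image_inter: "f ` X \<inter> f ` Y = f ` (X \<inter> Y)" if "X \<subseteq> verts H" "Y \<subseteq> verts H" for X Y
    using inj_on_image_Int[OF f(1) that] by simp
  show ?thesis
  proof (rule modelI)
    fix v assume v: "v \<in> verts G"
    show "f ` \<beta> v \<noteq> {}" "f ` \<beta> v \<subseteq> verts C"
      using model_nonempty[OF assms(1) v] model_subset[OF assms(1) v] f(2) by auto
    show "conn C (f ` \<beta> v)"
    proof (rule conn_image[OF model_conn[OF assms(1) v]])
      fix c d assume "adj H (\<beta> v) c d"
      then obtain e where "e \<in> edges H" "ends H e = {c, d}" "c \<in> \<beta> v" "d \<in> \<beta> v"
        unfolding adj_def by blast
      then have "g e \<in> edges C" "ends C (g e) = {f c, f d}"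
        using ends g(2) by auto
      then show "f c = f d \<or> adj C (f ` \<beta> v) (f c) (f d)"
        using \<open>c \<in> \<beta> v\<close> \<open>d \<in> \<beta> v\<close> unfolding adj_def by blast
    qed
  next
    fix v w assume "v \<in> verts G" "w \<in> verts G" "v \<noteq> w"
    then show "f ` \<beta> v \<inter> f ` \<beta> w = {}"
      using image_inter[OF model_subset[OF assms(1)] model_subset[OF assms(1)]]
        model_disjoint[OF assms(1)] by simp
  next
    show "inj_on (g \<circ> \<eta>) (edges G)"
      using model_inj[OF assms(1)] inj_on_subset[OF g(1) model_edges[OF assms(1)]]
      by (rule comp_inj_on)
    show "(g \<circ> \<eta>) ` edges G \<subseteq> edges C"
      using model_edges[OF assms(1)] g(2) by auto
  next
    fix e x assume "e \<in> edges G" "x \<in> ends G e"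
    then obtain y where "y \<in> ends H (\<eta> e)" "y \<in> \<beta> x"
      using model_meets[OF assms(1)] by blast
    then show "ends C ((g \<circ> \<eta>) e) \<inter> f ` \<beta> x \<noteq> {}"
      using ends_\<eta>[OF \<open>e \<in> edges G\<close>] by auto
  next
    fix e assume "e \<in> edges G"
    then show "ends C ((g \<circ> \<eta>) e) \<subseteq> (\<Union>x\<in>ends G e. f ` \<beta> x)"
      using image_mono[OF model_within[OF assms(1)]] ends_\<eta> by (simp add: image_UN)
  qed
qed

section \<open>Minor steps and models\<close>

definition delete_vertex :: "('v, 'e) mgraph \<Rightarrow> 'v \<Rightarrow> ('v, 'e) mgraph" where
  "delete_vertex H x = \<lparr>verts = verts H - {x}, edges = edges H, ends = ends H\<rparr>"

definition delete_edge :: "('v, 'e) mgraph \<Rightarrow> 'e \<Rightarrow> ('v, 'e) mgraph" where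
  "delete_edge H f = \<lparr>verts = verts H, edges = edges H - {f}, ends = ends H\<rparr>"

definition contract_edge :: "('v, 'e) mgraph \<Rightarrow> 'e \<Rightarrow> 'v \<Rightarrow> 'v \<Rightarrow> ('v, 'e) mgraph" where
  "contract_edge H f u w = \<lparr>verts = verts H - {w}, edges = edges H - {f},
     ends = (\<lambda>g. (\<lambda>x. if x = w then u else x) ` ends H g)\<rparr>"

lemma delete_vertex_simps [simp]:
  "verts (delete_vertex H x) = verts H - {x}" "edges (delete_vertex H x) = edges H"
  "ends (delete_vertex H x) = ends H"
  unfolding delete_vertex_def by simp_all

lemma delete_edge_simps [simp]:
  "verts (delete_edge H f) = verts H" "edges (delete_edge H f) = edges H - {f}"
  "ends (delete_edge H f) = ends H"
  unfolding delete_edge_def by simp_all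

lemma contract_edge_simps [simp]:
  "verts (contract_edge H f u w) = verts H - {w}" "edges (contract_edge H f u w) = edges H - {f}"
  "ends (contract_edge H f u w) g = (\<lambda>x. if x = w then u else x) ` ends H g"
  unfolding contract_edge_def by simp_all

lemma minor_step_iff:
  "minor_step H K \<longleftrightarrow>
     (\<exists>x\<in>verts H. (\<forall>e\<in>edges H. x \<notin> ends H e) \<and> K = delete_vertex H x) \<or>
     (\<exists>f\<in>edges H. K = delete_edge H f) \<or>
     (\<exists>f\<in>edges H. \<exists>u w. ends H f = {u, w} \<and> u \<noteq> w \<and>
        (\<forall>g\<in>edges H. g \<noteq> f \<longrightarrow> ends H g \<noteq> ends H f) \<and> K = contract_edge H f u w)"
  unfolding minor_step_def delete_vertex_def delete_edge_def contract_edge_def ..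

lemma is_minor_refl: "is_minor G G"
  unfolding is_minor_def graph_iso_def by (auto intro: bij_betw_id[unfolded id_def])

lemma is_minor_minor_step: "minor_step H K \<Longrightarrow> is_minor G K \<Longrightarrow> is_minor G H"
  unfolding is_minor_def by (meson converse_rtranclp_into_rtranclp)

lemma multigraph_delete_vertex:
  "multigraph H \<Longrightarrow> \<forall>e\<in>edges H. x \<notin> ends H e \<Longrightarrow> multigraph (delete_vertex H x)"
  unfolding multigraph_def by auto

lemma multigraph_delete_edge: "multigraph H \<Longrightarrow> multigraph (delete_edge H f)"
  unfolding multigraph_def by auto

lemma multigraph_contract_edge:
  assumes "multigraph H" "f \<in> edges H" "ends H f = {u, w}" "u \<noteq> w"
    and no_parallel: "\<forall>g\<in>edges H. g \<noteq> f \<longrightarrow> ends H g \<noteq> ends H f"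
  shows "multigraph (contract_edge H f u w)"
  unfolding multigraph_def
proof (intro conjI ballI)
  show "finite (verts (contract_edge H f u w))" "finite (edges (contract_edge H f u w))"
    using assms(1) unfolding multigraph_def by simp_all
next
  fix g assume "g \<in> edges (contract_edge H f u w)"
  then have g: "g \<in> edges H" "g \<noteq> f" by simp_all
  obtain c d where cd: "ends H g = {c, d}" "c \<noteq> d"
    using multigraphD(2)[OF assms(1) g(1)] by blast
  have "u \<in> verts H" "ends H g \<subseteq> verts H"
    using multigraphD(1)[OF assms(1)] assms(2,3) g(1) by blast+
  then show "ends (contract_edge H f u w) g \<subseteq> verts (contract_edge H f u w)"
    using \<open>u \<noteq> w\<close> by auto
  have "{c, d} \<noteq> {u, w}"
    using no_parallel g assms(3) cd(1) by metis
  then have "(if c = w then u else c) \<noteq> (if d = w then u else d)"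
    using cd(2) by (auto simp: doubleton_eq_iff)
  moreover have "ends (contract_edge H f u w) g = {if c = w then u else c, if d = w then u else d}"
    by (simp only: contract_edge_simps cd(1) image_insert image_empty)
  ultimately show "card (ends (contract_edge H f u w) g) = 2"
    by simp
qed

lemma minor_step_multigraph: "multigraph H \<Longrightarrow> minor_step H K \<Longrightarrow> multigraph K"
  unfolding minor_step_iff
  by (auto intro: multigraph_delete_vertex multigraph_delete_edge multigraph_contract_edge)

lemma model_supergraph:
  assumes M: "model G K \<beta> \<eta>" and sub: "verts K \<subseteq> verts H" "edges K \<subseteq> edges H"
    and ends: "\<forall>e\<in>edges K. ends K e = ends H e"
  shows "model G H \<beta> \<eta>"
proof (rule modelI)
  fix v assume v: "v \<in> verts G"
  show "\<beta> v \<noteq> {}" "\<beta> v \<subseteq> verts H"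
    using model_nonempty[OF M v] model_subset[OF M v] sub(1) by blast+
  show "conn H (\<beta> v)"
    using model_conn[OF M v] by (rule conn_mono) (use sub(2) ends in \<open>auto simp: adj_def\<close>)
next
  have ends_\<eta>: "ends K (\<eta> e) = ends H (\<eta> e)" if "e \<in> edges G" for e
    using ends model_edges[OF M] that by blast
  fix e x
  show "e \<in> edges G \<Longrightarrow> x \<in> ends G e \<Longrightarrow> ends H (\<eta> e) \<inter> \<beta> x \<noteq> {}"
    using model_meets[OF M] ends_\<eta> by simp
  show "e \<in> edges G \<Longrightarrow> ends H (\<eta> e) \<subseteq> (\<Union>x\<in>ends G e. \<beta> x)"
    using model_within[OF M] ends_\<eta> by simp
qed (use model_disjoint[OF M] model_inj[OF M] model_edges[OF M] sub(2) in blast)+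

lemma conn_uncontract:
  assumes H: "multigraph H" "f \<in> edges H" "ends H f = {u, w}"
    and S: "conn (contract_edge H f u w) S" "w \<notin> S"
  shows "conn H (if u \<in> S then insert w S else S)" (is "conn H ?T")
proof -
  define \<phi> where "\<phi> = (\<lambda>y. if y = w then u else y)"
  have in_T: "y \<in> ?T" if "\<phi> y \<in> S" for y
    using that unfolding \<phi>_def by (cases "y = w") auto
  show ?thesis
  proof (rule conn_lift[OF S(1)])
    show "\<phi> ` ?T \<subseteq> S"
      using S(2) unfolding \<phi>_def by auto
  next
    fix a assume "a \<in> ?T"
    show "(adj H ?T)\<^sup>*\<^sup>* a (\<phi> a)"
    proof (cases "a = w")
      case True
      with \<open>a \<in> ?T\<close> S(2) have "u \<in> S"
        by (auto split: if_splits)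
      then have "adj H ?T w u"
        using H(2,3) unfolding adj_def by (auto simp: insert_commute)
      with True show ?thesis
        unfolding \<phi>_def by auto
    qed (simp add: \<phi>_def)
  next
    fix c d assume "adj (contract_edge H f u w) S c d"
    then obtain g where g: "g \<in> edges H" "\<phi> ` ends H g = {c, d}" "c \<in> S" "d \<in> S"
      unfolding adj_def \<phi>_def by auto
    obtain p q where pq: "ends H g = {p, q}"
      using multigraphD(2)[OF H(1) g(1)] by blast
    then have cd: "{\<phi> p, \<phi> q} = {c, d}"
      using g(2) by simp
    then have "\<phi> p \<in> S" "\<phi> q \<in> S"
      using g(3,4) by auto
    then have "p \<in> ?T" "q \<in> ?T"
      by (simp_all only: in_T)
    then have adjs: "adj H ?T p q" "adj H ?T q p"
      using g(1) pq unfolding adj_def by (auto simp: insert_commute)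
    from cd consider "\<phi> p = c" "\<phi> q = d" | "\<phi> q = c" "\<phi> p = d"
      by (auto simp: doubleton_eq_iff)
    then show "\<exists>p q. \<phi> p = c \<and> \<phi> q = d \<and> adj H ?T p q"
      by cases (use adjs in blast)+
  qed
qed

lemma model_uncontract:
  assumes H: "multigraph H" "f \<in> edges H" "ends H f = {u, w}"
    and M: "model G (contract_edge H f u w) \<beta> \<eta>"
  defines "\<beta>' \<equiv> \<lambda>x. if u \<in> \<beta> x then insert w (\<beta> x) else \<beta> x"
  shows "model G H \<beta>' \<eta>"
proof -
  let ?K = "contract_edge H f u w"
  define \<phi> where "\<phi> = (\<lambda>y. if y = w then u else y)"
  have ends_K: "ends ?K g = \<phi> ` ends H g" for g
    unfolding \<phi>_def by simp
  have w_notin: "w \<notin> \<beta> x" if "x \<in> verts G" for x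
    using model_subset[OF M that] by auto
  have uw: "u \<in> verts H" "w \<in> verts H"
    using multigraphD(1)[OF H(1,2)] H(3) by blast+
  have in_\<beta>': "y \<in> \<beta>' x" if "\<phi> y \<in> \<beta> x" for x y
    using that unfolding \<phi>_def \<beta>'_def by (cases "y = w") auto
  have \<phi>_in_\<beta>: "\<phi> y \<in> \<beta> x" if "y \<in> \<beta>' x" "x \<in> verts G" for x y
    using that w_notin unfolding \<phi>_def \<beta>'_def by (auto split: if_splits)
  show ?thesis
  proof (rule modelI)
    fix v assume v: "v \<in> verts G"
    show "\<beta>' v \<noteq> {}" "\<beta>' v \<subseteq> verts H"
      using model_nonempty[OF M v] model_subset[OF M v] uw unfolding \<beta>'_def by auto
    show "conn H (\<beta>' v)"
      unfolding \<beta>'_def using conn_uncontract[OF H model_conn[OF M v] w_notin[OF v]] .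
  next
    fix v x assume "v \<in> verts G" "x \<in> verts G" "v \<noteq> x"
    then show "\<beta>' v \<inter> \<beta>' x = {}"
      using \<phi>_in_\<beta> model_disjoint[OF M] by blast
  next
    show "inj_on \<eta> (edges G)" "\<eta> ` edges G \<subseteq> edges H"
      using model_inj[OF M] model_edges[OF M] by auto
  next
    fix e x assume "e \<in> edges G" "x \<in> ends G e"
    then have "\<phi> ` ends H (\<eta> e) \<inter> \<beta> x \<noteq> {}"
      using model_meets[OF M] unfolding ends_K by blast
    then obtain y where "y \<in> ends H (\<eta> e)" "\<phi> y \<in> \<beta> x"
      by blast
    then show "ends H (\<eta> e) \<inter> \<beta>' x \<noteq> {}"
      using in_\<beta>' by blast
  next
    fix e assume "e \<in> edges G"
    show "ends H (\<eta> e) \<subseteq> (\<Union>x\<in>ends G e. \<beta>' x)"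
    proof
      fix y assume "y \<in> ends H (\<eta> e)"
      then have "\<phi> y \<in> (\<Union>x\<in>ends G e. \<beta> x)"
        using model_within[OF M \<open>e \<in> edges G\<close>] ends_K by blast
      then show "y \<in> (\<Union>x\<in>ends G e. \<beta>' x)"
        using in_\<beta>' by blast
    qed
  qed
qed

lemma minor_step_model:
  assumes "multigraph H" "minor_step H K" "model G K \<beta> \<eta>"
  obtains \<beta>' where "model G H \<beta>' \<eta>"
  using assms(2) unfolding minor_step_iff
proof (elim disjE bexE exE conjE)
  fix x assume "K = delete_vertex H x"
  then show thesis
    using model_supergraph[OF assms(3)] that by auto
next
  fix f assume "K = delete_edge H f"
  then show thesis
    using model_supergraph[OF assms(3)] that by auto
next
  fix f u w assume "f \<in> edges H" "ends H f = {u, w}" "K = contract_edge H f u w"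
  then show thesis
    using model_uncontract[OF assms(1)] assms(3) that by blast
qed

lemma is_minor_model:
  assumes "multigraph H" "is_minor G H"
  obtains \<beta> \<eta> where "model G H \<beta> \<eta>"
proof -
  obtain H' where "minor_step\<^sup>*\<^sup>* H H'" "graph_iso H' G"
    using assms(2) unfolding is_minor_def by blast
  have "multigraph X \<longrightarrow> (\<exists>\<beta> \<eta>. model G X \<beta> \<eta>)" if "minor_step\<^sup>*\<^sup>* X H'" for X
    using that
  proof (induction rule: converse_rtranclp_induct)
    case base
    show ?case
    proof
      assume "multigraph H'"
      then have "\<forall>e\<in>edges H'. ends H' e \<subseteq> verts H'"
        unfolding multigraph_def by blast
      moreover obtain f g where "graph_iso_by H' G f g"
        using \<open>graph_iso H' G\<close> unfolding graph_iso_iff by blast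
      ultimately have "graph_embedding G H' (inv_into (verts H') f) (inv_into (edges H') g)"
        using graph_iso_by_inv graph_iso_by_embedding by blast
      then show "\<exists>\<beta> \<eta>. model G H' \<beta> \<eta>"
        using model_embedding[OF model_singletons] by blast
    qed
  next
    case (step X Y)
    then show ?case
      using minor_step_multigraph minor_step_model by metis
  qed
  then show ?thesis
    using \<open>minor_step\<^sup>*\<^sup>* H H'\<close> assms(1) that by blast
qed

lemma model_edge_inside_branch_set:
  assumes G: "multigraph G" and M: "model G H \<beta> \<eta>" and v: "v \<in> verts G" "ends H f \<subseteq> \<beta> v"
  shows "f \<notin> \<eta> ` edges G"
proof
  assume "f \<in> \<eta> ` edges G"
  then obtain e where e: "e \<in> edges G" "f = \<eta> e" by blast
  obtain x y where xy: "ends G e = {x, y}" "x \<noteq> y"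
    using multigraphD(2)[OF G e(1)] by blast
  have "x \<in> verts G" "y \<in> verts G"
    using multigraphD(1)[OF G e(1)] xy(1) by blast+
  moreover have "\<beta> v \<inter> \<beta> x \<noteq> {}" "\<beta> v \<inter> \<beta> y \<noteq> {}"
    using model_meets[OF M e(1)] xy(1) e(2) v(2) by blast+
  ultimately have "v = x" "v = y"
    using model_disjoint[OF M v(1)] by blast+
  with xy(2) show False by simp
qed

lemma model_delete_edge:
  assumes M: "model G H \<beta> \<eta>" and f: "f \<notin> \<eta> ` edges G"
    and spare: "\<And>v. v \<in> verts G \<Longrightarrow> ends H f \<subseteq> \<beta> v \<Longrightarrow> \<exists>f'\<in>edges H. f' \<noteq> f \<and> ends H f' = ends H f"
  shows "model G (delete_edge H f) \<beta> \<eta>"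
proof (rule modelI)
  fix v assume v: "v \<in> verts G"
  show "conn (delete_edge H f) (\<beta> v)"
  proof (rule conn_mono[OF model_conn[OF M v]])
    fix c d assume "adj H (\<beta> v) c d"
    then obtain g where g: "g \<in> edges H" "ends H g = {c, d}" "c \<in> \<beta> v" "d \<in> \<beta> v"
      unfolding adj_def by blast
    show "adj (delete_edge H f) (\<beta> v) c d"
    proof (cases "g = f")
      case True
      with g spare[OF v] obtain f' where "f' \<in> edges H" "f' \<noteq> f" "ends H f' = {c, d}"
        by auto
      with g show ?thesis
        unfolding adj_def by auto
    next
      case False
      with g show ?thesis
        unfolding adj_def by auto
    qed
  qed
qed (use M f model_edges[OF M, unfolded image_subset_iff] in \<open>auto simp: modelD\<close>)

lemma model_delete_vertex:
  assumes M: "model G H \<beta> \<eta>" and x: "x \<notin> (\<Union>v\<in>verts G. \<beta> v)"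
  shows "model G (delete_vertex H x) \<beta> \<eta>"
proof (rule modelI)
  fix v assume v: "v \<in> verts G"
  show "\<beta> v \<subseteq> verts (delete_vertex H x)"
    using model_subset[OF M v] x v by auto
  show "conn (delete_vertex H x) (\<beta> v)"
    using model_conn[OF M v] by (rule conn_mono) (simp add: adj_def)
qed (use M in \<open>auto simp: modelD\<close>)

lemma conn_contract_edge:
  assumes "ends H f = {a, b}" "conn H S"
  shows "conn (contract_edge H f a b) ((\<lambda>y. if y = b then a else y) ` S)"
proof -
  define \<phi> where "\<phi> = (\<lambda>y. if y = b then a else y)"
  have "conn (contract_edge H f a b) (\<phi> ` S)"
  proof (rule conn_image[OF assms(2)])
    fix c d assume "adj H S c d"
    then obtain g where g: "g \<in> edges H" "ends H g = {c, d}" "c \<in> S" "d \<in> S"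
      unfolding adj_def by blast
    show "\<phi> c = \<phi> d \<or> adj (contract_edge H f a b) (\<phi> ` S) (\<phi> c) (\<phi> d)"
    proof (cases "g = f")
      case True
      with g(2) assms(1) show ?thesis
        unfolding \<phi>_def by (auto simp: doubleton_eq_iff)
    next
      case False
      with g have "g \<in> edges (contract_edge H f a b)" "ends (contract_edge H f a b) g = {\<phi> c, \<phi> d}"
        unfolding \<phi>_def by simp_all
      moreover have "\<phi> c \<in> \<phi> ` S" "\<phi> d \<in> \<phi> ` S"
        using g(3,4) by simp_all
      ultimately show ?thesis
        unfolding adj_def by blast
    qed
  qed
  then show ?thesis
    unfolding \<phi>_def .
qed

lemma model_contract_edge:
  assumes G: "multigraph G" and M: "model G H \<beta> \<eta>"
    and f: "f \<in> edges H" "ends H f = {a, b}" "a \<noteq> b" and v: "v \<in> verts G" "{a, b} \<subseteq> \<beta> v"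
  shows "model G (contract_edge H f a b) (\<beta>(v := \<beta> v - {b})) \<eta>"
proof -
  let ?K = "contract_edge H f a b" and ?\<beta>' = "\<beta>(v := \<beta> v - {b})"
  define \<phi> where "\<phi> = (\<lambda>y. if y = b then a else y)"
  have ends_K: "ends ?K g = \<phi> ` ends H g" for g
    unfolding \<phi>_def by simp
  have outside_v: "a \<notin> \<beta> x" "b \<notin> \<beta> x" if "x \<in> verts G" "x \<noteq> v" for x
    using model_disjoint[OF M that(1) v(1) that(2)] v(2) by blast+
  have image_\<beta>: "\<phi> ` \<beta> x = ?\<beta>' x" if "x \<in> verts G" for x
  proof (cases "x = v")
    case True
    with v(2) f(3) show ?thesis
      unfolding \<phi>_def by (auto simp: image_iff)
  next
    case False
    with outside_v[OF that] show ?thesis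
      unfolding \<phi>_def by (auto simp: image_iff)
  qed
  have b_notin: "b \<notin> ?\<beta>' x" if "x \<in> verts G" for x
    using outside_v[OF that] by (cases "x = v") auto
  have "f \<notin> \<eta> ` edges G"
    using model_edge_inside_branch_set[OF G M v(1)] f(2) v(2) by blast
  show ?thesis
  proof (rule modelI)
    fix x assume x: "x \<in> verts G"
    show "?\<beta>' x \<noteq> {}"
      using model_nonempty[OF M x] image_\<beta>[OF x] by blast
    show "?\<beta>' x \<subseteq> verts ?K"
      using model_subset[OF M x] b_notin[OF x] by auto
    have "conn ?K (\<phi> ` \<beta> x)"
      unfolding \<phi>_def using f(2) model_conn[OF M x] by (rule conn_contract_edge)
    then show "conn ?K (?\<beta>' x)"
      using image_\<beta>[OF x] by simp
  next
    fix x y assume "x \<in> verts G" "y \<in> verts G" "x \<noteq> y"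
    then show "?\<beta>' x \<inter> ?\<beta>' y = {}"
      using model_disjoint[OF M] by auto
  next
    show "inj_on \<eta> (edges G)" "\<eta> ` edges G \<subseteq> edges ?K"
      using model_inj[OF M] model_edges[OF M] \<open>f \<notin> \<eta> ` edges G\<close> by auto
  next
    fix e x assume e: "e \<in> edges G" "x \<in> ends G e"
    then have "x \<in> verts G"
      using multigraphD(1)[OF G] by blast
    obtain y where "y \<in> ends H (\<eta> e)" "y \<in> \<beta> x"
      using model_meets[OF M e] by blast
    then have "\<phi> y \<in> ends ?K (\<eta> e)" "\<phi> y \<in> \<phi> ` \<beta> x"
      unfolding ends_K by simp_all
    then show "ends ?K (\<eta> e) \<inter> ?\<beta>' x \<noteq> {}"
      unfolding image_\<beta>[OF \<open>x \<in> verts G\<close>] by blast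
  next
    fix e assume e: "e \<in> edges G"
    have "\<phi> ` (\<Union>x\<in>ends G e. \<beta> x) = (\<Union>x\<in>ends G e. \<phi> ` \<beta> x)"
      by (rule image_UN)
    also have "\<dots> = (\<Union>x\<in>ends G e. ?\<beta>' x)"
      by (intro SUP_cong refl image_\<beta>) (use multigraphD(1)[OF G e] in blast)
    finally have "\<phi> ` (\<Union>x\<in>ends G e. \<beta> x) = (\<Union>x\<in>ends G e. ?\<beta>' x)" .
    moreover have "ends ?K (\<eta> e) \<subseteq> \<phi> ` (\<Union>x\<in>ends G e. \<beta> x)"
      unfolding ends_K by (rule image_mono[OF model_within[OF M e]])
    ultimately show "ends ?K (\<eta> e) \<subseteq> (\<Union>x\<in>ends G e. ?\<beta>' x)"
      by simp
  qed
qed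

text \<open>An edge inside a branch set would be unused, so connectivity forces the branch set to be a
  singleton.\<close>

lemma model_onto_edges_singleton:
  assumes G: "multigraph G" and M: "model G H \<beta> \<eta>" and onto: "\<eta> ` edges G = edges H"
    and v: "v \<in> verts G"
  obtains r where "\<beta> v = {r}"
proof -
  have "\<exists>r. \<beta> v = {r}"
  proof (rule ccontr)
    assume "\<nexists>r. \<beta> v = {r}"
    with model_nonempty[OF M v] obtain a b where ab: "a \<in> \<beta> v" "b \<in> \<beta> v" "a \<noteq> b"
      by blast
    have "(adj H (\<beta> v))\<^sup>*\<^sup>* a b"
      using model_conn[OF M v] ab unfolding conn_def by blast
    then obtain c d where "adj H (\<beta> v) c d"
      using ab(3) by (induction rule: rtranclp_induct) auto
    then obtain f where "f \<in> edges H" "ends H f = {c, d}" "c \<in> \<beta> v" "d \<in> \<beta> v"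
      unfolding adj_def by blast
    then have "f \<notin> \<eta> ` edges G"
      using model_edge_inside_branch_set[OF G M v] by simp
    with \<open>f \<in> edges H\<close> onto show False
      by simp
  qed
  then show ?thesis
    using that by blast
qed

lemma model_onto_graph_iso:
  assumes G: "multigraph G" and M: "model G H \<beta> \<eta>"
    and onto: "\<eta> ` edges G = edges H" "(\<Union>v\<in>verts G. \<beta> v) = verts H"
  shows "graph_iso H G"
proof -
  define r where "r v = the_elem (\<beta> v)" for v
  have \<beta>_r: "\<beta> v = {r v}" if v: "v \<in> verts G" for v
  proof -
    obtain r0 where "\<beta> v = {r0}"
      using model_onto_edges_singleton[OF G M onto(1) v] .
    then show ?thesis
      unfolding r_def by simp
  qed
  have "graph_iso_by G H r \<eta>"
    unfolding graph_iso_by_def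
  proof (intro conjI ballI)
    have "inj_on r (verts G)"
    proof (rule inj_onI, rule ccontr)
      fix x y assume "x \<in> verts G" "y \<in> verts G" "r x = r y" "x \<noteq> y"
      then have "{r x} \<inter> {r y} = {}"
        using model_disjoint[OF M] \<beta>_r by metis
      with \<open>r x = r y\<close> show False
        by simp
    qed
    moreover have "(\<Union>v\<in>verts G. \<beta> v) = (\<Union>v\<in>verts G. {r v})"
      using \<beta>_r by (rule SUP_cong[OF refl])
    then have "r ` verts G = verts H"
      using onto(2) by (simp add: UNION_singleton_eq_range)
    ultimately show "bij_betw r (verts G) (verts H)"
      unfolding bij_betw_def by blast
    show "bij_betw \<eta> (edges G) (edges H)"
      using model_inj[OF M] onto(1) unfolding bij_betw_def by blast
  next
    fix e assume e: "e \<in> edges G"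
    then have "ends G e \<subseteq> verts G"
      by (rule multigraphD(1)[OF G])
    then have "(\<Union>x\<in>ends G e. \<beta> x) = r ` ends G e"
      using \<beta>_r by (auto simp: subset_iff)
    then have "ends H (\<eta> e) \<subseteq> r ` ends G e"
      using model_within[OF M e] by simp
    moreover have "r ` ends G e \<subseteq> ends H (\<eta> e)"
      using model_meets[OF M e] \<beta>_r \<open>ends G e \<subseteq> verts G\<close> by fastforce
    ultimately show "ends H (\<eta> e) = r ` ends G e" ..
  qed
  then have "graph_iso_by H G (inv_into (verts G) r) (inv_into (edges G) \<eta>)"
    by (rule graph_iso_by_inv) (use G in \<open>simp add: multigraph_def\<close>)
  then show ?thesis
    unfolding graph_iso_iff by blast
qed

lemma model_unused_edge_minor_step:
  assumes G: "multigraph G" and H: "multigraph H" and M: "model G H \<beta> \<eta>"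
    and f: "f \<in> edges H" "f \<notin> \<eta> ` edges G"
  obtains K \<beta>' where "minor_step H K" "model G K \<beta>' \<eta>"
    "card (verts K) + card (edges K) < card (verts H) + card (edges H)"
proof -
  have fin: "finite (verts H)" "finite (edges H)"
    using H unfolding multigraph_def by blast+
  have fewer_edges: "card (edges H - {f}) < card (edges H)"
    using fin(2) f(1) by (rule card_Diff1_less)
  show ?thesis
  proof (cases "\<exists>v\<in>verts G. ends H f \<subseteq> \<beta> v \<and> (\<forall>g\<in>edges H. g \<noteq> f \<longrightarrow> ends H g \<noteq> ends H f)")
    case True
    then obtain v where v: "v \<in> verts G" "ends H f \<subseteq> \<beta> v"
      and no_parallel: "\<forall>g\<in>edges H. g \<noteq> f \<longrightarrow> ends H g \<noteq> ends H f"
      by blast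
    obtain a b where ab: "ends H f = {a, b}" "a \<noteq> b"
      using multigraphD(2)[OF H f(1)] by blast
    have "b \<in> verts H"
      using multigraphD(1)[OF H f(1)] ab(1) by blast
    then have "card (verts H - {b}) < card (verts H)"
      using fin(1) by (rule card_Diff1_less[rotated])
    then have "card (verts (contract_edge H f a b)) + card (edges (contract_edge H f a b))
        < card (verts H) + card (edges H)"
      unfolding contract_edge_simps using fewer_edges by (rule add_strict_mono)
    moreover have "minor_step H (contract_edge H f a b)"
      unfolding minor_step_iff using f(1) ab no_parallel by blast
    moreover have "model G (contract_edge H f a b) (\<beta>(v := \<beta> v - {b})) \<eta>"
      using model_contract_edge[OF G M f(1) ab(1) ab(2) v(1)] v(2) ab(1) by simp
    ultimately show ?thesis
      using that by blast
  next
    case False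
    then have "model G (delete_edge H f) \<beta> \<eta>"
      using model_delete_edge[OF M f(2)] by blast
    moreover have "minor_step H (delete_edge H f)"
      unfolding minor_step_iff using f(1) by blast
    moreover have "card (verts (delete_edge H f)) + card (edges (delete_edge H f))
        < card (verts H) + card (edges H)"
      using fewer_edges by simp
    ultimately show ?thesis
      using that by blast
  qed
qed

lemma model_uncovered_vertex_minor_step:
  assumes G: "multigraph G" and H: "multigraph H" and M: "model G H \<beta> \<eta>"
    and onto: "\<eta> ` edges G = edges H" and x: "x \<in> verts H" "x \<notin> (\<Union>v\<in>verts G. \<beta> v)"
  shows "minor_step H (delete_vertex H x)" "model G (delete_vertex H x) \<beta> \<eta>"
    and "card (verts (delete_vertex H x)) + card (edges (delete_vertex H x))
      < card (verts H) + card (edges H)"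
proof -
  have "x \<notin> ends H e" if e: "e \<in> edges H" for e
  proof -
    obtain e0 where e0: "e0 \<in> edges G" "e = \<eta> e0"
      using e onto by blast
    have "(\<Union>v\<in>ends G e0. \<beta> v) \<subseteq> (\<Union>v\<in>verts G. \<beta> v)"
      using multigraphD(1)[OF G e0(1)] by (rule UN_mono) simp
    then have "ends H e \<subseteq> (\<Union>v\<in>verts G. \<beta> v)"
      using model_within[OF M e0(1)] e0(2) by simp
    with x(2) show ?thesis
      by blast
  qed
  with x(1) show "minor_step H (delete_vertex H x)"
    unfolding minor_step_iff by blast
  show "model G (delete_vertex H x) \<beta> \<eta>"
    using M x(2) by (rule model_delete_vertex)
  have "finite (verts H)"
    using H unfolding multigraph_def by blast
  then have "card (verts H - {x}) < card (verts H)"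
    using x(1) by (rule card_Diff1_less)
  then show "card (verts (delete_vertex H x)) + card (edges (delete_vertex H x))
      < card (verts H) + card (edges H)"
    by simp
qed

lemma model_is_minor:
  assumes G: "multigraph G" and "multigraph H" "model G H \<beta> \<eta>"
  shows "is_minor G H"
  using assms(2,3)
proof (induction "card (verts H) + card (edges H)" arbitrary: H \<beta> rule: less_induct)
  case less
  note H = less.prems(1) and M = less.prems(2)
  have smaller: "is_minor G H"
    if "minor_step H K" "model G K \<beta>' \<eta>"
      "card (verts K) + card (edges K) < card (verts H) + card (edges H)" for K \<beta>'
    using less.hyps[OF that(3) minor_step_multigraph[OF H that(1)] that(2)]
    by (rule is_minor_minor_step[OF that(1)])
  show ?case
  proof (cases "\<eta> ` edges G = edges H")
    case False
    then obtain f where "f \<in> edges H" "f \<notin> \<eta> ` edges G"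
      using model_edges[OF M] by blast
    then obtain K \<beta>' where "minor_step H K" "model G K \<beta>' \<eta>"
      "card (verts K) + card (edges K) < card (verts H) + card (edges H)"
      by (rule model_unused_edge_minor_step[OF G H M])
    then show ?thesis
      by (rule smaller)
  next
    case onto: True
    show ?thesis
    proof (cases "(\<Union>v\<in>verts G. \<beta> v) = verts H")
      case True
      then have "graph_iso H G"
        using model_onto_graph_iso[OF G M onto] by blast
      then show ?thesis
        unfolding is_minor_def by blast
    next
      case False
      moreover have "(\<Union>v\<in>verts G. \<beta> v) \<subseteq> verts H"
        using model_subset[OF M] by (rule UN_least)
      ultimately obtain x where x: "x \<in> verts H" "x \<notin> (\<Union>v\<in>verts G. \<beta> v)"
        by blast
      show ?thesis
        using model_uncovered_vertex_minor_step[OF G H M onto x] by (rule smaller)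
    qed
  qed
qed

section \<open>The spectator floor\<close>

lemma multigraph_induced: "multigraph H \<Longrightarrow> S \<subseteq> verts H \<Longrightarrow> multigraph (induced H S)"
  unfolding multigraph_def by (auto intro: finite_subset)

lemma wf_graph_induced: "wf_graph H \<Longrightarrow> S \<subseteq> verts H \<Longrightarrow> S \<noteq> {} \<Longrightarrow> wf_graph (induced H S)"
  unfolding wf_graph_iff_multigraph by (simp add: multigraph_induced)

lemma model_induced:
  assumes M: "model G H \<beta> \<eta>" and W: "W \<subseteq> verts G" "\<forall>v\<in>W. \<beta> v \<subseteq> S"
  shows "model (induced G W) (induced H S) \<beta> \<eta>"
proof (rule modelI)
  fix v assume "v \<in> verts (induced G W)"
  then have v: "v \<in> verts G" "\<beta> v \<subseteq> S"
    using W by auto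
  show "\<beta> v \<noteq> {}" "\<beta> v \<subseteq> verts (induced H S)"
    using model_nonempty[OF M v(1)] v(2) by simp_all
  show "conn (induced H S) (\<beta> v)"
    using model_conn[OF M v(1)] by (rule conn_mono) (use v(2) in \<open>fastforce simp: adj_def\<close>)
next
  show "\<eta> ` edges (induced G W) \<subseteq> edges (induced H S)"
  proof
    fix e' assume "e' \<in> \<eta> ` edges (induced G W)"
    then obtain e where e: "e \<in> edges G" "ends G e \<subseteq> W" "e' = \<eta> e"
      by auto
    have "ends H (\<eta> e) \<subseteq> (\<Union>x\<in>ends G e. \<beta> x)"
      using model_within[OF M e(1)] .
    also have "\<dots> \<subseteq> S"
      using e(2) W(2) by blast
    finally show "e' \<in> edges (induced H S)"
      using model_edges[OF M] e by auto
  qed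
next
  show "inj_on \<eta> (edges (induced G W))"
    using model_inj[OF M] by (rule inj_on_subset) auto
next
  fix v w assume "v \<in> verts (induced G W)" "w \<in> verts (induced G W)" "v \<noteq> w"
  then show "\<beta> v \<inter> \<beta> w = {}"
    using model_disjoint[OF M] W(1) by auto
qed (use M in \<open>auto simp: modelD\<close>)

lemma sp_induced_split:
  assumes H: "wf_graph H" and P: "unique_shortest_path H vs es" "length vs = usp H"
    and S: "S1 \<union> S2 = verts H" "S1 \<inter> S2 = set vs"
  shows "sp (induced H S1) + sp (induced H S2) \<le> sp H"
proof -
  have fin: "finite S1" "finite S2"
    using H S(1) unfolding wf_graph_def by (metis finite_Un)+
  have "distinct vs"
    using unique_shortest_path_is_path[OF P(1)] unfolding is_path_def by blast
  then have card_vs: "card (set vs) = length vs"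
    by (rule distinct_card)
  have bounds: "length vs \<le> usp (induced H S) \<and> length vs \<le> card S" if "S \<in> {S1, S2}" for S
  proof (intro conjI)
    have "set vs \<subseteq> S" "S \<subseteq> verts H" "finite S"
      using that S fin by auto
    then have "unique_shortest_path (induced H S) vs es"
      using unique_shortest_path_induced[OF P(1)] by blast
    then show "length vs \<le> usp (induced H S)"
      using length_le_usp[of "induced H S"] \<open>finite S\<close> by simp
    show "length vs \<le> card S"
      using card_mono[OF \<open>finite S\<close> \<open>set vs \<subseteq> S\<close>] card_vs by simp
  qed
  have "card S1 + card S2 = card (verts H) + length vs"
    using card_Un_Int[OF fin] S card_vs by simp
  with bounds[of S1] bounds[of S2] show ?thesis
    unfolding sp_def P(2)[symmetric] induced_simps by simp linarith
qed

lemma sp_floor_le: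
  fixes H :: "(nat, nat) mgraph"
  assumes "wf_graph H" "is_minor G H"
  shows "sp_floor G \<le> sp H"
  unfolding sp_floor_def using assms by (intro cInf_lower) auto

lemma is_minor_graph_iso_by:
  assumes G: "multigraph G" and C: "wf_graph C" "is_minor G C" and iso: "graph_iso_by C C' f g"
  shows "is_minor G C'"
proof -
  obtain \<beta> \<eta> where "model G C \<beta> \<eta>"
    using is_minor_model C unfolding wf_graph_iff_multigraph by blast
  then have "model G C' (\<lambda>v. f ` \<beta> v) (g \<circ> \<eta>)"
    using model_embedding graph_iso_by_embedding[OF iso] by blast
  moreover have "multigraph C'"
    using wf_graph_iso_by[OF C(1) iso] unfolding wf_graph_iff_multigraph by blast
  ultimately show ?thesis
    using model_is_minor[OF G] by blast
qed

lemma ex_nat_host: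
  assumes "wf_graph G"
  obtains H :: "(nat, nat) mgraph" where "wf_graph H" "is_minor G H"
proof -
  have "finite (verts G)" "finite (edges G)"
    using assms unfolding wf_graph_def by blast+
  then obtain H :: "(nat, nat) mgraph" and f g where iso: "graph_iso_by G H f g"
    by (rule ex_graph_iso_nat)
  have "multigraph G"
    using assms unfolding wf_graph_iff_multigraph by blast
  then have "is_minor G H"
    using is_minor_graph_iso_by assms is_minor_refl iso by blast
  with wf_graph_iso_by[OF assms iso] show ?thesis
    by (rule that)
qed

text \<open>\<open>sp_floor\<close> only ranges over hosts labelled by \<open>nat\<close>; relabelling any host onto \<open>nat\<close>
  preserves its spectator number.\<close>

lemma sp_floor_le_host:
  assumes G: "multigraph G" and C: "wf_graph C" "is_minor G C"
  shows "sp_floor G \<le> sp C"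
proof -
  have "finite (verts C)" "finite (edges C)"
    using C(1) unfolding wf_graph_def by blast+
  then obtain B :: "(nat, nat) mgraph" and f g where iso: "graph_iso_by C B f g"
    by (rule ex_graph_iso_nat)
  have "sp_floor G \<le> sp B"
    using wf_graph_iso_by[OF C(1) iso] is_minor_graph_iso_by[OF G C iso] by (rule sp_floor_le)
  also have "sp B = sp C"
    using C(1) iso by (rule sp_graph_iso_by)
  finally show ?thesis .
qed

lemma sp_floor_attained:
  assumes "wf_graph G"
  obtains H :: "(nat, nat) mgraph" where "wf_graph H" "is_minor G H" "sp H = sp_floor G"
proof -
  obtain H0 :: "(nat, nat) mgraph" where "wf_graph H0" "is_minor G H0"
    using ex_nat_host[OF assms] .
  then have "{sp H | H :: (nat, nat) mgraph. wf_graph H \<and> is_minor G H} \<noteq> {}"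
    by blast
  from Inf_nat_def1[OF this] show ?thesis
    using that unfolding sp_floor_def by auto
qed

lemma sp_floor_induced_add_le:
  fixes H :: "(nat, nat) mgraph"
  assumes G: "multigraph G" "V1 \<union> V2 = verts G" "V1 \<inter> V2 = {}"
    and H: "wf_graph H" "is_minor G H"
  shows "sp_floor (induced G V1) + sp_floor (induced G V2) \<le> sp H"
proof -
  have mH: "multigraph H" and fin: "finite (verts H)" "verts H \<noteq> {}"
    using H(1) unfolding wf_graph_iff_multigraph multigraph_def by blast+
  obtain \<beta> \<eta> where M: "model G H \<beta> \<eta>"
    using is_minor_model[OF mH H(2)] .
  obtain vs es where P: "unique_shortest_path H vs es" "length vs = usp H"
    using usp_attained[OF fin] .
  have vs_H: "set vs \<subseteq> verts H" "vs \<noteq> []"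
    using unique_shortest_path_is_path[OF P(1)] unfolding is_path_def by blast+
  define B2 where "B2 = (\<Union>v\<in>V2. \<beta> v)"
  have "B2 \<subseteq> verts H"
    unfolding B2_def using model_subset[OF M] G(2) by blast
  define S1 where "S1 = (verts H - B2) \<union> set vs"
  define S2 where "S2 = B2 \<union> set vs"
  have S: "S1 \<subseteq> verts H" "S1 \<noteq> {}" "S2 \<subseteq> verts H" "S2 \<noteq> {}"
    using vs_H \<open>B2 \<subseteq> verts H\<close> unfolding S1_def S2_def by auto
  have "model (induced G V1) (induced H S1) \<beta> \<eta>"
  proof (rule model_induced[OF M])
    show "\<forall>v\<in>V1. \<beta> v \<subseteq> S1"
      using model_disjoint[OF M] model_subset[OF M] G(2,3) unfolding S1_def B2_def by blast
  qed (use G(2) in blast)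
  then have "sp_floor (induced G V1) \<le> sp (induced H S1)"
    using G(1) G(2) S(1,2) H(1)
    by (intro sp_floor_le_host model_is_minor multigraph_induced wf_graph_induced)
      (auto simp: wf_graph_iff_multigraph)
  moreover have "model (induced G V2) (induced H S2) \<beta> \<eta>"
    by (rule model_induced[OF M]) (use G(2) in \<open>auto simp: S2_def B2_def\<close>)
  then have "sp_floor (induced G V2) \<le> sp (induced H S2)"
    using G(1) G(2) S(3,4) H(1)
    by (intro sp_floor_le_host model_is_minor multigraph_induced wf_graph_induced)
      (auto simp: wf_graph_iff_multigraph)
  moreover have "sp (induced H S1) + sp (induced H S2) \<le> sp H"
    using H(1) P by (rule sp_induced_split) (use vs_H \<open>B2 \<subseteq> verts H\<close> in \<open>auto simp: S1_def S2_def\<close>)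
  ultimately show ?thesis
    by linarith
qed

section \<open>Bridge unions\<close>

definition bridge_union ::
  "('a, 'c) mgraph \<Rightarrow> ('b, 'd) mgraph \<Rightarrow> 'a \<Rightarrow> 'b \<Rightarrow> ('a + 'b, ('c + 'd) option) mgraph" where
  "bridge_union H1 H2 t s = \<lparr>verts = Inl ` verts H1 \<union> Inr ` verts H2,
     edges = insert None (Some ` (Inl ` edges H1 \<union> Inr ` edges H2)),
     ends = (\<lambda>x. case x of None \<Rightarrow> {Inl t, Inr s}
                         | Some (Inl e) \<Rightarrow> Inl ` ends H1 e
                         | Some (Inr e) \<Rightarrow> Inr ` ends H2 e)\<rparr>"

lemma bridge_union_simps [simp]:
  "verts (bridge_union H1 H2 t s) = Inl ` verts H1 \<union> Inr ` verts H2"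
  "edges (bridge_union H1 H2 t s) = insert None (Some ` (Inl ` edges H1 \<union> Inr ` edges H2))"
  "ends (bridge_union H1 H2 t s) None = {Inl t, Inr s}"
  "ends (bridge_union H1 H2 t s) (Some (Inl e)) = Inl ` ends H1 e"
  "ends (bridge_union H1 H2 t s) (Some (Inr e')) = Inr ` ends H2 e'"
  unfolding bridge_union_def by simp_all

lemma wf_graph_bridge_union:
  assumes "wf_graph H1" "wf_graph H2" "t \<in> verts H1" "s \<in> verts H2"
  shows "wf_graph (bridge_union H1 H2 t s)"
  using assms unfolding wf_graph_def by (fastforce simp: card_image)

lemma graph_embedding_bridge_union:
  "graph_embedding H1 (bridge_union H1 H2 t s) Inl (Some \<circ> Inl)"
  "graph_embedding H2 (bridge_union H1 H2 t s) Inr (Some \<circ> Inr)"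
  unfolding graph_embedding_def by (auto simp: inj_on_def)

lemma graph_iso_bridge_union_induced:
  assumes "multigraph H1" "multigraph H2"
  shows "graph_iso_by H1 (induced (bridge_union H1 H2 t s) (Inl ` verts H1)) Inl (Some \<circ> Inl)"
    and "graph_iso_by H2 (induced (bridge_union H1 H2 t s) (Inr ` verts H2)) Inr (Some \<circ> Inr)"
proof -
  let ?C = "bridge_union H1 H2 t s"
  have ends1: "ends H1 e \<noteq> {} \<and> ends H1 e \<subseteq> verts H1" if "e \<in> edges H1" for e
    using multigraphD[OF assms(1) that] by auto
  have ends2: "ends H2 e \<noteq> {} \<and> ends H2 e \<subseteq> verts H2" if "e \<in> edges H2" for e
    using multigraphD[OF assms(2) that] by auto
  have disjoint_images: "Inr ` A \<subseteq> Inl ` B \<longleftrightarrow> A = {}" "Inl ` A \<subseteq> Inr ` B \<longleftrightarrow> A = {}"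
    for A B by auto
  have inj: "inj_on Inl A" "inj_on (Some \<circ> Inl) A" "inj_on Inr B" "inj_on (Some \<circ> Inr) B" for A B
    by (simp_all add: inj_on_def)
  have "x \<in> edges (induced ?C (Inl ` verts H1)) \<longleftrightarrow> x \<in> (Some \<circ> Inl) ` edges H1" for x
  proof (cases x)
    case (Some y)
    then show ?thesis
      by (cases y) (auto simp: disjoint_images dest: ends1 ends2)
  qed auto
  then have E1: "edges (induced ?C (Inl ` verts H1)) = (Some \<circ> Inl) ` edges H1"
    by blast
  show "graph_iso_by H1 (induced ?C (Inl ` verts H1)) Inl (Some \<circ> Inl)"
    unfolding graph_iso_by_def induced_simps(1) E1
    by (intro conjI inj_on_imp_bij_betw[OF inj(1)] inj_on_imp_bij_betw[OF inj(2)]) simp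
  have "x \<in> edges (induced ?C (Inr ` verts H2)) \<longleftrightarrow> x \<in> (Some \<circ> Inr) ` edges H2" for x
  proof (cases x)
    case (Some y)
    then show ?thesis
      by (cases y) (auto simp: disjoint_images dest: ends1 ends2)
  qed auto
  then have E2: "edges (induced ?C (Inr ` verts H2)) = (Some \<circ> Inr) ` edges H2"
    by blast
  show "graph_iso_by H2 (induced ?C (Inr ` verts H2)) Inr (Some \<circ> Inr)"
    unfolding graph_iso_by_def induced_simps(1) E2
    by (intro conjI inj_on_imp_bij_betw[OF inj(3)] inj_on_imp_bij_betw[OF inj(4)]) simp
qed

lemma sp_bridge_union_le:
  assumes H: "wf_graph H1" "wf_graph H2"
    and P1: "unique_shortest_path H1 vs1 es1" "length vs1 = usp H1"
    and P2: "unique_shortest_path H2 vs2 es2" "length vs2 = usp H2"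
  shows "sp (bridge_union H1 H2 (last vs1) (hd vs2)) \<le> sp H1 + sp H2"
proof -
  let ?C = "bridge_union H1 H2 (last vs1) (hd vs2)" and ?S = "Inl ` verts H1"
  have mg: "multigraph H1" "multigraph H2" and fin: "finite (verts H1)" "finite (verts H2)"
    and ne: "verts H1 \<noteq> {}" "verts H2 \<noteq> {}"
    using H unfolding wf_graph_iff_multigraph multigraph_def by blast+
  have "vs1 \<noteq> []" "set vs1 \<subseteq> verts H1" "vs2 \<noteq> []" "set vs2 \<subseteq> verts H2"
    using P1(1) P2(1) unfolding unique_shortest_path_iff is_path_def by blast+
  then have ends_in: "last vs1 \<in> verts H1" "hd vs2 \<in> verts H2"
    by auto
  have U1: "unique_shortest_path (induced ?C ?S) (map Inl vs1) (map (Some \<circ> Inl) es1)"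
    using unique_shortest_path_graph_iso_by[OF graph_iso_bridge_union_induced(1)[OF mg] _ P1(1)] mg(1)
    unfolding multigraph_def by blast
  have "verts ?C - ?S = Inr ` verts H2"
    by auto
  then have U2: "unique_shortest_path (induced ?C (verts ?C - ?S)) (map Inr vs2) (map (Some \<circ> Inr) es2)"
    using unique_shortest_path_graph_iso_by[OF graph_iso_bridge_union_induced(2)[OF mg] _ P2(1)] mg(2)
    unfolding multigraph_def by simp
  have "ends ?C e \<subseteq> ?S \<or> ends ?C e \<inter> ?S = {}" if "e \<in> edges ?C - {None}" for e
  proof -
    from that consider e1 where "e1 \<in> edges H1" "e = Some (Inl e1)"
      | e2 where "e2 \<in> edges H2" "e = Some (Inr e2)"
      by auto
    then show ?thesis
      using multigraphD(1)[OF mg(1)] by cases auto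
  qed
  then have cut: "\<forall>e\<in>edges ?C - {None}. \<forall>x\<in>ends ?C e. \<forall>y\<in>ends ?C e. x \<in> ?S \<longleftrightarrow> y \<in> ?S"
    by blast
  have "unique_shortest_path ?C (map Inl vs1 @ map Inr vs2) (map (Some \<circ> Inl) es1 @ None # map (Some \<circ> Inr) es2)"
  proof (rule unique_shortest_path_across_bridge[OF _ _ _ _ cut _ U1 _ U2])
    show "Inl (last vs1) \<in> ?S" "last (map Inl vs1) = Inl (last vs1)" "hd (map Inr vs2) = Inr (hd vs2)"
      using ends_in \<open>vs1 \<noteq> []\<close> \<open>vs2 \<noteq> []\<close> by (simp_all add: last_map hd_map)
  qed auto
  then have "usp H1 + usp H2 \<le> usp ?C"
    using length_le_usp[of ?C] fin P1(2) P2(2) by fastforce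
  moreover have "card (verts ?C) = card (verts H1) + card (verts H2)"
    using card_Plus[OF fin] by (simp add: Plus_def)
  ultimately show ?thesis
    using usp_le_card[OF fin(1) ne(1)] usp_le_card[OF fin(2) ne(2)] unfolding sp_def by linarith
qed

lemma inj_on_if_disjoint_images:
  assumes "inj_on f A" "inj_on g B" "f ` A \<inter> g ` B = {}" "\<forall>x\<in>A. P x" "\<forall>x\<in>B. \<not> P x"
  shows "inj_on (\<lambda>x. if P x then f x else g x) (A \<union> B)"
proof (rule inj_onI)
  fix x y assume xy: "x \<in> A \<union> B" "y \<in> A \<union> B"
    and eq: "(if P x then f x else g x) = (if P y then f y else g y)"
  consider "x \<in> A" "y \<in> A" | "x \<in> A" "y \<in> B" | "x \<in> B" "y \<in> A" | "x \<in> B" "y \<in> B"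
    using xy by blast
  then show "x = y"
  proof cases
    case 1
    with eq assms(4) show ?thesis
      using inj_onD[OF assms(1)] by simp
  next
    case 2
    with eq assms(3-5) show ?thesis
      by (metis IntI emptyE imageI)
  next
    case 3
    with eq assms(3-5) show ?thesis
      by (metis IntI emptyE imageI)
  next
    case 4
    with eq assms(5) show ?thesis
      using inj_onD[OF assms(2)] by simp
  qed
qed

lemma model_union:
  assumes G: "multigraph G" "V1 \<union> V2 = verts G" "V1 \<inter> V2 = {}"
    and no_cross: "\<forall>e\<in>edges G. ends G e \<subseteq> V1 \<or> ends G e \<subseteq> V2"
    and M1: "model (induced G V1) C \<beta>1 \<eta>1" and M2: "model (induced G V2) C \<beta>2 \<eta>2"
    and disjoint: "\<And>v w. v \<in> V1 \<Longrightarrow> w \<in> V2 \<Longrightarrow> \<beta>1 v \<inter> \<beta>2 w = {}"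
      "\<eta>1 ` edges (induced G V1) \<inter> \<eta>2 ` edges (induced G V2) = {}"
  shows "model G C (\<lambda>v. if v \<in> V1 then \<beta>1 v else \<beta>2 v) (\<lambda>e. if ends G e \<subseteq> V1 then \<eta>1 e else \<eta>2 e)"
    (is "model G C ?\<beta> ?\<eta>")
proof -
  have V2: "v \<in> V2" if "v \<in> verts G" "v \<notin> V1" for v
    using that G(2) by blast
  have edge_sides: "e \<in> edges (induced G V1) \<and> ?\<eta> e = \<eta>1 e \<and> (\<forall>x\<in>ends G e. ?\<beta> x = \<beta>1 x) \<or>
      e \<in> edges (induced G V2) \<and> ?\<eta> e = \<eta>2 e \<and> (\<forall>x\<in>ends G e. ?\<beta> x = \<beta>2 x)"
    if "e \<in> edges G" for e
  proof (cases "ends G e \<subseteq> V1")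
    case True
    with that show ?thesis
      by auto
  next
    case False
    with that no_cross have "ends G e \<subseteq> V2"
      by blast
    with False that G(3) show ?thesis
      by auto
  qed
  have vertex_sides: "v \<in> verts (induced G V1) \<and> ?\<beta> v = \<beta>1 v \<or> v \<in> verts (induced G V2) \<and> ?\<beta> v = \<beta>2 v"
    if "v \<in> verts G" for v
    using that V2 by auto
  have disjoint': "\<beta>2 w \<inter> \<beta>1 v = {}" if "v \<in> V1" "w \<in> V2" for v w
    using disjoint(1)[OF that] by (simp add: Int_commute)
  show ?thesis
  proof (rule modelI)
    fix v assume "v \<in> verts G"
    then show "?\<beta> v \<noteq> {}" "?\<beta> v \<subseteq> verts C" "conn C (?\<beta> v)"
      using vertex_sides[of v] model_subset[OF M1, of v] model_subset[OF M2, of v]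
      by (auto simp: model_nonempty[OF M1] model_nonempty[OF M2] model_conn[OF M1] model_conn[OF M2])
  next
    fix v w assume vw: "v \<in> verts G" "w \<in> verts G" "v \<noteq> w"
    consider "v \<in> V1" "w \<in> V1" | "v \<in> V1" "w \<in> V2" "w \<notin> V1" | "v \<in> V2" "v \<notin> V1" "w \<in> V1"
      | "v \<in> V2" "v \<notin> V1" "w \<in> V2" "w \<notin> V1"
      using V2 vw by blast
    then show "?\<beta> v \<inter> ?\<beta> w = {}"
      by cases (simp_all add: vw(3) model_disjoint[OF M1] model_disjoint[OF M2] disjoint(1) disjoint')
  next
    have "ends G e \<noteq> {}" if "e \<in> edges G" for e
      using multigraphD(2)[OF G(1) that] by blast
    then have "\<forall>e\<in>edges (induced G V2). \<not> ends G e \<subseteq> V1"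
      using G(3) by fastforce
    then have "inj_on ?\<eta> (edges (induced G V1) \<union> edges (induced G V2))"
      using model_inj[OF M1] model_inj[OF M2] disjoint(2) by (intro inj_on_if_disjoint_images) auto
    moreover have "edges (induced G V1) \<union> edges (induced G V2) = edges G"
      using edge_sides by auto
    ultimately show "inj_on ?\<eta> (edges G)"
      by simp
  next
    show "?\<eta> ` edges G \<subseteq> edges C"
    proof (rule image_subsetI)
      fix e assume "e \<in> edges G"
      then show "?\<eta> e \<in> edges C"
        using edge_sides[of e] model_edges[OF M1] model_edges[OF M2] by blast
    qed
  next
    fix e x assume "e \<in> edges G" "x \<in> ends G e"
    then show "ends C (?\<eta> e) \<inter> ?\<beta> x \<noteq> {}"
      using edge_sides[of e] model_meets[OF M1, of e x] model_meets[OF M2, of e x] by auto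
  next
    fix e assume "e \<in> edges G"
    from edge_sides[OF this] show "ends C (?\<eta> e) \<subseteq> (\<Union>x\<in>ends G e. ?\<beta> x)"
    proof (elim disjE conjE)
      assume "e \<in> edges (induced G V1)" "?\<eta> e = \<eta>1 e" "\<forall>x\<in>ends G e. ?\<beta> x = \<beta>1 x"
      then show ?thesis
        using model_within[OF M1, of e] by (simp cong: SUP_cong)
    next
      assume "e \<in> edges (induced G V2)" "?\<eta> e = \<eta>2 e" "\<forall>x\<in>ends G e. ?\<beta> x = \<beta>2 x"
      then show ?thesis
        using model_within[OF M2, of e] by (simp cong: SUP_cong)
    qed
  qed
qed

lemma is_minor_bridge_union:
  assumes G: "multigraph G" "V1 \<union> V2 = verts G" "V1 \<inter> V2 = {}"
    and no_cross: "\<forall>e\<in>edges G. ends G e \<subseteq> V1 \<or> ends G e \<subseteq> V2"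
    and H: "wf_graph H1" "wf_graph H2" "t \<in> verts H1" "s \<in> verts H2"
    and minors: "is_minor (induced G V1) H1" "is_minor (induced G V2) H2"
  shows "is_minor G (bridge_union H1 H2 t s)"
proof -
  let ?C = "bridge_union H1 H2 t s"
  have "multigraph H1" "multigraph H2"
    using H(1,2) unfolding wf_graph_iff_multigraph by blast+
  obtain \<beta>1 \<eta>1 where "model (induced G V1) H1 \<beta>1 \<eta>1"
    using is_minor_model[OF \<open>multigraph H1\<close> minors(1)] .
  then have M1: "model (induced G V1) ?C (\<lambda>v. Inl ` \<beta>1 v) ((Some \<circ> Inl) \<circ> \<eta>1)"
    using graph_embedding_bridge_union(1) by (rule model_embedding)
  obtain \<beta>2 \<eta>2 where "model (induced G V2) H2 \<beta>2 \<eta>2"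
    using is_minor_model[OF \<open>multigraph H2\<close> minors(2)] .
  then have M2: "model (induced G V2) ?C (\<lambda>v. Inr ` \<beta>2 v) ((Some \<circ> Inr) \<circ> \<eta>2)"
    using graph_embedding_bridge_union(2) by (rule model_embedding)
  have "model G ?C (\<lambda>v. if v \<in> V1 then Inl ` \<beta>1 v else Inr ` \<beta>2 v)
      (\<lambda>e. if ends G e \<subseteq> V1 then ((Some \<circ> Inl) \<circ> \<eta>1) e else ((Some \<circ> Inr) \<circ> \<eta>2) e)"
    by (rule model_union[OF G no_cross M1 M2]) auto
  moreover have "multigraph ?C"
    using wf_graph_bridge_union[OF H] unfolding wf_graph_iff_multigraph by blast
  ultimately show ?thesis
    using model_is_minor[OF G(1)] by blast
qed

lemma sp_floor_le_add:
  assumes G: "wf_graph G" "V1 \<noteq> {}" "V2 \<noteq> {}" "V1 \<union> V2 = verts G" "V1 \<inter> V2 = {}"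
    and no_cross: "\<forall>e\<in>edges G. ends G e \<subseteq> V1 \<or> ends G e \<subseteq> V2"
  shows "sp_floor G \<le> sp_floor (induced G V1) + sp_floor (induced G V2)"
proof -
  have mG: "multigraph G"
    using G(1) unfolding wf_graph_iff_multigraph by blast
  obtain H1 :: "(nat, nat) mgraph" where H1: "wf_graph H1" "is_minor (induced G V1) H1"
    "sp H1 = sp_floor (induced G V1)"
    using sp_floor_attained[OF wf_graph_induced[OF G(1) _ G(2)]] G(4) by blast
  obtain H2 :: "(nat, nat) mgraph" where H2: "wf_graph H2" "is_minor (induced G V2) H2"
    "sp H2 = sp_floor (induced G V2)"
    using sp_floor_attained[OF wf_graph_induced[OF G(1) _ G(3)]] G(4) by blast
  obtain vs1 es1 where P1: "unique_shortest_path H1 vs1 es1" "length vs1 = usp H1"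
    using usp_attained H1(1) unfolding wf_graph_def by blast
  obtain vs2 es2 where P2: "unique_shortest_path H2 vs2 es2" "length vs2 = usp H2"
    using usp_attained H2(1) unfolding wf_graph_def by blast
  have "vs1 \<noteq> []" "set vs1 \<subseteq> verts H1" "vs2 \<noteq> []" "set vs2 \<subseteq> verts H2"
    using unique_shortest_path_is_path[OF P1(1)] unique_shortest_path_is_path[OF P2(1)]
    unfolding is_path_def by blast+
  then have ends: "last vs1 \<in> verts H1" "hd vs2 \<in> verts H2"
    by auto
  have "sp_floor G \<le> sp (bridge_union H1 H2 (last vs1) (hd vs2))"
    using wf_graph_bridge_union[OF H1(1) H2(1) ends]
      is_minor_bridge_union[OF mG G(4,5) no_cross H1(1) H2(1) ends H1(2) H2(2)]
    by (rule sp_floor_le_host[OF mG])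
  also have "\<dots> \<le> sp H1 + sp H2"
    using sp_bridge_union_le[OF H1(1) H2(1) P1 P2] .
  finally show ?thesis
    using H1(3) H2(3) by simp
qed

theorem theorem3p1:
  fixes G :: "('v, 'e) mgraph" and V1 V2 :: "'v set"
  assumes "wf_graph G"
    and "V1 \<noteq> {}" and "V2 \<noteq> {}"
    and "V1 \<union> V2 = verts G" and "V1 \<inter> V2 = {}"
    and "\<forall>e\<in>edges G. ends G e \<subseteq> V1 \<or> ends G e \<subseteq> V2"
  shows "sp_floor G = sp_floor (induced G V1) + sp_floor (induced G V2)"
proof (rule antisym)
  show "sp_floor G \<le> sp_floor (induced G V1) + sp_floor (induced G V2)"
    using sp_floor_le_add assms by blast
  have "multigraph G"
    using assms(1) unfolding wf_graph_iff_multigraph by blast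
  obtain H0 :: "(nat, nat) mgraph" where "wf_graph H0" "is_minor G H0"
    using ex_nat_host[OF assms(1)] .
  then show "sp_floor (induced G V1) + sp_floor (induced G V2) \<le> sp_floor G"
    unfolding sp_floor_def[of G]
    using sp_floor_induced_add_le[OF \<open>multigraph G\<close> assms(4,5)] by (intro cInf_greatest) blast+
qed

end
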